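(* Let $\alpha>0$. The spectrum of the generalized Alexander operator $C_{g_0}:\mathcal{B}_\alpha^0\to\mathcal{B}_\alpha^0$ is $\sigma(C_{g_0})=\{g_0(0)/n: n\in\mathbb{N}\}\cup\{0\}$, where $0$ is an approximate eigenvalue.
   Context: $\mathbb{D}=\{z\in\mathbb{C}:|z|<1\}$. For $\alpha>0$, the $\alpha$-Bloch space $\mathcal{B}_\alpha$ is the space of analytic functions $f$ on $\mathbb{D}$ with $\|f\|_{\mathcal{B}_\alpha}:=\sup_{z\in\mathbb{D}}(1-|z|^2)^\alpha|f'(z)|<\infty$. $\mathcal{B}_\alpha^0=\{f\in\mathcal{B}_\alpha: f(0)=0\}$, a complex Banach space with norm $\|\cdot\|_{\mathcal{B}_\alpha}$. Let $g_0(w)=\sum_{j=1}^k a_j+h(w)$, where $k\ge1$, $a_j\in\mathbb{C}$ with $|a_j|>0$, and $h$ is a bounded analytic function on $\mathbb{D}$; $C_{g_0}(f)(z)=\int_0^z\frac{f(w)g_0(w)}{w}\,dw$. An approximate eigenvalue of $T$ is $\lambda$ such that there are unit vectors $x_n$ with $\|(T-\lambda I)x_n\|\to0$. $\mathbb{N}=\{1,2,3,\dots\}$. *)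

theory Defs
  imports "HOL-Complex_Analysis.Complex_Analysis"
begin

text \<open>Functions on the unit disc are represented as functions \<open>complex \<Rightarrow> complex\<close>
  which vanish outside the disc (so that equality of such functions is equality on the disc).\<close>

definition bloch_weight :: "real \<Rightarrow> (complex \<Rightarrow> complex) \<Rightarrow> complex \<Rightarrow> real" where
  "bloch_weight \<alpha> f z = (1 - (cmod z)^2) powr \<alpha> * cmod (deriv f z)"

definition bloch_norm :: "real \<Rightarrow> (complex \<Rightarrow> complex) \<Rightarrow> real" where
  "bloch_norm \<alpha> f = (SUP z\<in>ball 0 1. bloch_weight \<alpha> f z)"

definition bloch0 :: "real \<Rightarrow> (complex \<Rightarrow> complex) set" where
  "bloch0 \<alpha> = {f. f holomorphic_on ball 0 1 \<and> f 0 = 0 \<and> (\<forall>z. z \<notin> ball 0 1 \<longrightarrow> f z = 0)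
                  \<and> bdd_above (bloch_weight \<alpha> f ` ball 0 1)}"

definition alexander_op :: "(complex \<Rightarrow> complex) \<Rightarrow> (complex \<Rightarrow> complex) \<Rightarrow> complex \<Rightarrow> complex" where
  "alexander_op g f = (\<lambda>z. if z \<in> ball 0 1
      then contour_integral (linepath 0 z) (\<lambda>w. f w * g w / w) else 0)"

definition bounded_op_on :: "real \<Rightarrow> ((complex \<Rightarrow> complex) \<Rightarrow> (complex \<Rightarrow> complex)) \<Rightarrow> bool" where
  "bounded_op_on \<alpha> S \<longleftrightarrow>
     (\<forall>f\<in>bloch0 \<alpha>. S f \<in> bloch0 \<alpha>) \<and>
     (\<forall>f\<in>bloch0 \<alpha>. \<forall>g\<in>bloch0 \<alpha>. \<forall>c::complex. S (\<lambda>z. f z + c * g z) = (\<lambda>z. S f z + c * S g z)) \<and>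
     (\<exists>M. \<forall>f\<in>bloch0 \<alpha>. bloch_norm \<alpha> (S f) \<le> M * bloch_norm \<alpha> f)"

definition bloch_spectrum :: "real \<Rightarrow> ((complex \<Rightarrow> complex) \<Rightarrow> (complex \<Rightarrow> complex)) \<Rightarrow> complex set" where
  "bloch_spectrum \<alpha> T = {\<mu>. \<not> (\<exists>S. bounded_op_on \<alpha> S \<and>
       (\<forall>f\<in>bloch0 \<alpha>. S (\<lambda>z. T f z - \<mu> * f z) = f \<and> (\<lambda>z. T (S f) z - \<mu> * S f z) = f))}"

definition approx_eigenvalue :: "real \<Rightarrow> ((complex \<Rightarrow> complex) \<Rightarrow> (complex \<Rightarrow> complex)) \<Rightarrow> complex \<Rightarrow> bool" where
  "approx_eigenvalue \<alpha> T \<mu> \<longleftrightarrow>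
     (\<exists>x::nat \<Rightarrow> complex \<Rightarrow> complex. (\<forall>n. x n \<in> bloch0 \<alpha> \<and> bloch_norm \<alpha> (x n) = 1) \<and>
        (\<lambda>n. bloch_norm \<alpha> (\<lambda>z. T (x n) z - \<mu> * x n z)) \<longlonglongrightarrow> 0)"

end

(*
  Write g = g(0) + (g - g(0)) and E(z) = exp ((1/mu) * integral from 0 to z of (g(w) - g(0))/w dw),
  so that z E' = (g - g(0)) E / mu.  For f = E F the derivative of C_g f - mu f is then
  E (g(0) F - mu z F') / z: for mu nonzero, conjugation by E turns C_g - mu into an Euler operator.
  Its kernel among functions vanishing at 0 is spanned by z^n when mu = g(0)/n, which gives the
  eigenvalues E z^n.  For all other mu it is invertible with weighted bounds: z H' + s H = omega is
  solved by H(z) = integral over [0,1] of t^(s-1) omega(t z) dt when Re s > 1, and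
  H = omega(0)/s + z H1 reduces any s outside {0, -1, -2, ...} to s + 1; since E is a multiplier of
  the Bloch space and 1/E is bounded, this yields a bounded inverse of C_g - mu.
  Finally, 0 is an approximate eigenvalue because the Bloch norm of C_g z^n is at most
  sup |g| * |z^n|_B / n.
*)

theory Submission
  imports Defs
begin

section \<open>Weighted norms on the unit disc\<close>

abbreviation disc :: "complex set" where "disc \<equiv> ball 0 1"

definition disc_weight :: "real \<Rightarrow> complex \<Rightarrow> real" where
  "disc_weight \<alpha> z = (1 - (cmod z)^2) powr \<alpha>"

lemma one_minus_norm_square_pos: "z \<in> disc \<Longrightarrow> 0 < 1 - (cmod z)^2"
  using abs_square_less_1[of "cmod z"] by simp

lemma disc_weight_pos: "z \<in> disc \<Longrightarrow> 0 < disc_weight \<alpha> z"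
  unfolding disc_weight_def using one_minus_norm_square_pos[of z] by simp

lemma disc_weight_le_1: "z \<in> disc \<Longrightarrow> 0 \<le> \<alpha> \<Longrightarrow> disc_weight \<alpha> z \<le> 1"
  unfolding disc_weight_def using one_minus_norm_square_pos[of z] by (intro powr_le1) auto

lemma disc_weight_antimono:
  assumes "cmod w \<le> cmod z" "z \<in> disc" "0 \<le> \<alpha>"
  shows "disc_weight \<alpha> z \<le> disc_weight \<alpha> w"
proof -
  have "(cmod w)^2 \<le> (cmod z)^2" using assms(1) by (simp add: power_mono)
  then show ?thesis unfolding disc_weight_def using one_minus_norm_square_pos[OF assms(2)] assms(3)
    by (intro powr_mono2) auto
qed

lemma disc_weight_0 [simp]: "disc_weight \<alpha> 0 = 1"
  by (simp add: disc_weight_def)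

lemma disc_weight_exponent_0: "z \<in> disc \<Longrightarrow> disc_weight 0 z = 1"
  unfolding disc_weight_def using one_minus_norm_square_pos[of z] by simp

lemma continuous_on_disc_weight: "continuous_on disc (disc_weight \<alpha>)"
  unfolding disc_weight_def[abs_def] using one_minus_norm_square_pos
  by (intro continuous_intros) force

lemma le_at_centre_if_le_punctured:
  fixes \<phi> \<psi> :: "complex \<Rightarrow> real"
  assumes "0 < r" "continuous_on (ball 0 r) \<phi>" "continuous_on (ball 0 r) \<psi>"
    and le: "\<And>z. z \<in> ball 0 r \<Longrightarrow> z \<noteq> 0 \<Longrightarrow> \<phi> z \<le> \<psi> z"
  shows "\<phi> 0 \<le> \<psi> 0"
proof -
  have "isCont \<phi> 0" "isCont \<psi> 0"
    using assms(1-3) by (auto intro!: continuous_on_interior simp: interior_open)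
  then have "(\<phi> \<longlongrightarrow> \<phi> 0) (at 0)" "(\<psi> \<longlongrightarrow> \<psi> 0) (at 0)"
    by (simp_all add: isCont_def)
  moreover have "eventually (\<lambda>z. \<phi> z \<le> \<psi> z) (at 0)"
  proof -
    have "eventually (\<lambda>z. z \<in> ball 0 r) (at (0::complex))"
      by (rule eventually_at_in_open') (use assms(1) in auto)
    moreover have "eventually (\<lambda>z. z \<noteq> 0) (at (0::complex))"
      by (rule eventually_at_filter[THEN iffD2]) simp
    ultimately show ?thesis by eventually_elim (use le in blast)
  qed
  ultimately show ?thesis by (intro tendsto_le[of "at 0"]) simp_all
qed

lemma bloch_weight_eq: "bloch_weight \<alpha> f z = disc_weight \<alpha> z * cmod (deriv f z)"
  by (simp add: bloch_weight_def disc_weight_def)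

lemma bloch_weight_le_bloch_norm:
  "f \<in> bloch0 \<alpha> \<Longrightarrow> z \<in> disc \<Longrightarrow> bloch_weight \<alpha> f z \<le> bloch_norm \<alpha> f"
  unfolding bloch_norm_def bloch0_def by (auto intro!: cSUP_upper)

lemma deriv_le_bloch_norm:
  "f \<in> bloch0 \<alpha> \<Longrightarrow> z \<in> disc \<Longrightarrow> disc_weight \<alpha> z * cmod (deriv f z) \<le> bloch_norm \<alpha> f"
  using bloch_weight_le_bloch_norm by (simp add: bloch_weight_eq)

lemma bloch_norm_nonneg: "f \<in> bloch0 \<alpha> \<Longrightarrow> 0 \<le> bloch_norm \<alpha> f"
  using deriv_le_bloch_norm[of f \<alpha> 0] by (simp add: order_trans[OF norm_ge_zero])

lemma bloch_norm_le: "(\<And>z. z \<in> disc \<Longrightarrow> bloch_weight \<alpha> f z \<le> B) \<Longrightarrow> bloch_norm \<alpha> f \<le> B"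
  unfolding bloch_norm_def by (rule cSUP_least) auto

lemma bloch0I:
  assumes "f holomorphic_on disc" "f 0 = 0" "\<And>z. z \<notin> disc \<Longrightarrow> f z = 0"
    and "\<And>z. z \<in> disc \<Longrightarrow> bloch_weight \<alpha> f z \<le> B"
  shows "f \<in> bloch0 \<alpha>"
proof -
  have "bdd_above (bloch_weight \<alpha> f ` disc)"
    by (rule bdd_aboveI2[where M=B]) (use assms(4) in simp)
  then show ?thesis unfolding bloch0_def using assms(1-3) by simp
qed

lemma bloch0D:
  assumes "f \<in> bloch0 \<alpha>"
  shows "f holomorphic_on disc" "f 0 = 0" "\<And>z. z \<notin> disc \<Longrightarrow> f z = 0"
  using assms unfolding bloch0_def by auto

lemma bloch_weight_le_at_0:
  assumes F: "F holomorphic_on disc"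
    and le: "\<And>z. z \<in> disc \<Longrightarrow> z \<noteq> 0 \<Longrightarrow> bloch_weight \<alpha> F z \<le> B"
    and z: "z \<in> disc"
  shows "bloch_weight \<alpha> F z \<le> B"
proof (cases "z = 0")
  case True
  have "continuous_on disc (deriv F)"
    using F by (intro holomorphic_on_imp_continuous_on holomorphic_deriv) auto
  then have "continuous_on disc (\<lambda>z. disc_weight \<alpha> z * cmod (deriv F z))"
    by (intro continuous_intros continuous_on_disc_weight)
  from le_at_centre_if_le_punctured[OF zero_less_one this continuous_on_const]
  have "disc_weight \<alpha> 0 * cmod (deriv F 0) \<le> B"
    using le by (auto simp: bloch_weight_eq)
  then show ?thesis using True by (simp add: bloch_weight_eq)
qed (use le z in auto)

lemma bloch0_growth:
  assumes f: "f \<in> bloch0 \<alpha>" and z: "z \<in> disc" and \<alpha>: "0 \<le> \<alpha>"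
  shows "disc_weight \<alpha> z * cmod (f z) \<le> cmod z * bloch_norm \<alpha> f"
proof -
  let ?N = "bloch_norm \<alpha> f"
  have Wz: "0 < disc_weight \<alpha> z" using disc_weight_pos[OF z] .
  have "cmod (f z - f 0) \<le> (?N / disc_weight \<alpha> z) * cmod (z - 0)"
  proof (rule field_differentiable_bound[where S="cball (0::complex) (cmod z)" and f'="deriv f"])
    fix w :: complex assume w: "w \<in> cball 0 (cmod z)"
    then have wD: "w \<in> disc" using z by auto
    have "(f has_field_derivative deriv f w) (at w)"
      using bloch0D(1)[OF f] wD by (intro holomorphic_derivI[of f disc]) auto
    then show "(f has_field_derivative deriv f w) (at w within cball 0 (cmod z))"
      by (rule DERIV_subset) simp
    have "disc_weight \<alpha> z \<le> disc_weight \<alpha> w" using w z \<alpha> by (intro disc_weight_antimono) auto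
    then have "disc_weight \<alpha> z * cmod (deriv f w) \<le> disc_weight \<alpha> w * cmod (deriv f w)"
      by (rule mult_right_mono) simp
    then have "disc_weight \<alpha> z * cmod (deriv f w) \<le> ?N"
      using deriv_le_bloch_norm[OF f wD] by linarith
    then show "cmod (deriv f w) \<le> ?N / disc_weight \<alpha> z" using Wz by (simp add: field_simps)
  qed simp_all
  then have "cmod (f z) \<le> (?N / disc_weight \<alpha> z) * cmod z" using bloch0D(2)[OF f] by simp
  then show ?thesis using Wz by (simp add: field_simps)
qed

lemma deriv_lincomb:
  assumes "f holomorphic_on disc" "g holomorphic_on disc" "z \<in> disc"
  shows "deriv (\<lambda>z. f z + c * g z) z = deriv f z + c * deriv g z"
proof -
  have "f field_differentiable at z" "g field_differentiable at z"
    using assms by (auto intro: holomorphic_on_imp_differentiable_at)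
  then show ?thesis by (simp add: field_differentiable_mult)
qed

lemma bloch0_lincomb:
  assumes f: "f \<in> bloch0 \<alpha>" and g: "g \<in> bloch0 \<alpha>"
  shows "(\<lambda>z. f z + c * g z) \<in> bloch0 \<alpha>"
proof (rule bloch0I)
  fix z assume z: "z \<in> disc"
  have "deriv (\<lambda>z. f z + c * g z) z = deriv f z + c * deriv g z"
    using bloch0D(1)[OF f] bloch0D(1)[OF g] z by (rule deriv_lincomb)
  moreover have "cmod (deriv f z + c * deriv g z) \<le> cmod (deriv f z) + cmod c * cmod (deriv g z)"
    using norm_triangle_ineq[of "deriv f z" "c * deriv g z"] by (simp add: norm_mult)
  ultimately have "bloch_weight \<alpha> (\<lambda>z. f z + c * g z) z
      \<le> disc_weight \<alpha> z * (cmod (deriv f z) + cmod c * cmod (deriv g z))"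
    using disc_weight_pos[OF z, of \<alpha>] by (simp add: bloch_weight_eq mult_left_mono)
  also have "\<dots> = disc_weight \<alpha> z * cmod (deriv f z) + cmod c * (disc_weight \<alpha> z * cmod (deriv g z))"
    by (simp add: algebra_simps)
  also have "\<dots> \<le> bloch_norm \<alpha> f + cmod c * bloch_norm \<alpha> g"
    using deriv_le_bloch_norm[OF f z] deriv_le_bloch_norm[OF g z]
    by (intro add_mono mult_left_mono) auto
  finally show "bloch_weight \<alpha> (\<lambda>z. f z + c * g z) z \<le> bloch_norm \<alpha> f + cmod c * bloch_norm \<alpha> g" .
qed (use bloch0D[OF f] bloch0D[OF g] in \<open>auto intro!: holomorphic_intros\<close>)

lemma bloch0_scale:
  assumes F: "F \<in> bloch0 \<alpha>"
  shows "(\<lambda>z. a * F z) \<in> bloch0 \<alpha>" "bloch_norm \<alpha> (\<lambda>z. a * F z) = cmod a * bloch_norm \<alpha> F"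
proof -
  have w: "bloch_weight \<alpha> (\<lambda>z. a * F z) z = cmod a * bloch_weight \<alpha> F z" if z: "z \<in> disc" for z
  proof -
    have "F field_differentiable at z"
      using bloch0D(1)[OF F] z by (auto intro: holomorphic_on_imp_differentiable_at)
    then show ?thesis by (simp add: bloch_weight_eq norm_mult deriv_cmult)
  qed
  have le: "bloch_weight \<alpha> (\<lambda>z. a * F z) z \<le> cmod a * bloch_norm \<alpha> F" if z: "z \<in> disc" for z
    using w[OF z] bloch_weight_le_bloch_norm[OF F z] by (simp add: mult_left_mono)
  show aF: "(\<lambda>z. a * F z) \<in> bloch0 \<alpha>"
    by (rule bloch0I[OF _ _ _ le]) (use bloch0D[OF F] in \<open>auto intro!: holomorphic_intros\<close>)
  show "bloch_norm \<alpha> (\<lambda>z. a * F z) = cmod a * bloch_norm \<alpha> F"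
  proof (cases "a = 0")
    case False
    have "bloch_norm \<alpha> F \<le> bloch_norm \<alpha> (\<lambda>z. a * F z) / cmod a"
      using w bloch_weight_le_bloch_norm[OF aF] False by (intro bloch_norm_le) (simp add: field_simps)
    then have "cmod a * bloch_norm \<alpha> F \<le> bloch_norm \<alpha> (\<lambda>z. a * F z)"
      using False by (simp add: field_simps)
    then show ?thesis using bloch_norm_le[OF le] by simp
  qed (simp add: bloch_norm_def bloch_weight_def)
qed

lemma bloch0_multiplier:
  assumes F: "F \<in> bloch0 \<alpha>" and \<alpha>: "0 \<le> \<alpha>" and \<phi>: "\<phi> holomorphic_on disc"
    and B: "\<And>z. z \<in> disc \<Longrightarrow> cmod (\<phi> z) \<le> B" and B': "\<And>z. z \<in> disc \<Longrightarrow> cmod (deriv \<phi> z) \<le> B'"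
  shows "(\<lambda>z. \<phi> z * F z) \<in> bloch0 \<alpha>" "bloch_norm \<alpha> (\<lambda>z. \<phi> z * F z) \<le> (B + B') * bloch_norm \<alpha> F"
proof -
  let ?N = "bloch_norm \<alpha> F"
  have le: "bloch_weight \<alpha> (\<lambda>z. \<phi> z * F z) z \<le> (B + B') * ?N" if z: "z \<in> disc" for z
  proof -
    have W: "0 < disc_weight \<alpha> z" using disc_weight_pos[OF z] .
    have "0 \<le> B" "0 \<le> B'" using B[OF z] B'[OF z] by (meson norm_ge_zero order_trans)+
    have "\<phi> field_differentiable at z" "F field_differentiable at z"
      using \<phi> bloch0D(1)[OF F] z by (auto intro: holomorphic_on_imp_differentiable_at)
    then have "deriv (\<lambda>z. \<phi> z * F z) z = deriv \<phi> z * F z + \<phi> z * deriv F z"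
      by (simp only: deriv_mult) simp
    then have "cmod (deriv (\<lambda>z. \<phi> z * F z) z)
        \<le> cmod (deriv \<phi> z) * cmod (F z) + cmod (\<phi> z) * cmod (deriv F z)"
      using norm_triangle_ineq[of "deriv \<phi> z * F z" "\<phi> z * deriv F z"] by (simp add: norm_mult)
    then have "bloch_weight \<alpha> (\<lambda>z. \<phi> z * F z) z
        \<le> disc_weight \<alpha> z * (cmod (deriv \<phi> z) * cmod (F z) + cmod (\<phi> z) * cmod (deriv F z))"
      unfolding bloch_weight_eq using W by (simp add: mult_left_mono)
    also have "\<dots> = cmod (deriv \<phi> z) * (disc_weight \<alpha> z * cmod (F z))
        + cmod (\<phi> z) * (disc_weight \<alpha> z * cmod (deriv F z))"
      by (simp add: algebra_simps)
    also have "\<dots> \<le> B' * ?N + B * ?N"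
    proof (intro add_mono mult_mono)
      show "disc_weight \<alpha> z * cmod (F z) \<le> ?N"
        using bloch0_growth[OF F z \<alpha>] z bloch_norm_nonneg[OF F] mult_left_le_one_le[of ?N "cmod z"]
        by auto
      show "disc_weight \<alpha> z * cmod (deriv F z) \<le> ?N" by (rule deriv_le_bloch_norm[OF F z])
    qed (use B' B z bloch_norm_nonneg[OF F] W \<open>0 \<le> B\<close> \<open>0 \<le> B'\<close> in auto)
    finally show ?thesis by (simp add: algebra_simps)
  qed
  show "(\<lambda>z. \<phi> z * F z) \<in> bloch0 \<alpha>"
    by (rule bloch0I[OF _ _ _ le]) (use bloch0D[OF F] \<phi> in \<open>auto intro!: holomorphic_intros\<close>)
  show "bloch_norm \<alpha> (\<lambda>z. \<phi> z * F z) \<le> (B + B') * ?N" by (rule bloch_norm_le[OF le])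
qed

definition disc_hol0 :: "(complex \<Rightarrow> complex) \<Rightarrow> bool" where
  "disc_hol0 f \<longleftrightarrow> f holomorphic_on disc \<and> f 0 = 0 \<and> (\<forall>z. z \<notin> disc \<longrightarrow> f z = 0)"

lemma bloch0_imp_disc_hol0: "f \<in> bloch0 \<alpha> \<Longrightarrow> disc_hol0 f"
  unfolding disc_hol0_def using bloch0D by blast

lemma disc_hol0_lincomb: "disc_hol0 f \<Longrightarrow> disc_hol0 g \<Longrightarrow> disc_hol0 (\<lambda>z. f z + c * g z)"
  unfolding disc_hol0_def by (auto intro!: holomorphic_intros)

lemma disc_hol0_eqI:
  assumes f: "disc_hol0 f" and g: "disc_hol0 g"
    and eq: "\<And>z. z \<in> disc \<Longrightarrow> z \<noteq> 0 \<Longrightarrow> deriv f z = deriv g z"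
  shows "f = g"
proof -
  define u where "u = (\<lambda>z. f z + (-1) * g z)"
  have u: "u holomorphic_on disc" "u 0 = 0"
    using f g unfolding u_def disc_hol0_def by (auto intro!: holomorphic_intros)
  have du: "deriv u z = 0" if "z \<in> disc" "z \<noteq> 0" for z
    using f g that eq[OF that] unfolding u_def disc_hol0_def by (simp only: deriv_lincomb) simp
  have "continuous_on disc (\<lambda>z. cmod (deriv u z))"
    using u(1) by (intro continuous_intros holomorphic_on_imp_continuous_on holomorphic_deriv) auto
  from le_at_centre_if_le_punctured[where \<psi>="\<lambda>z. 0", OF zero_less_one this]
  have "deriv u 0 = 0" using du by simp
  with du have "\<forall>z\<in>disc. (u has_field_derivative 0) (at z within disc)"
    using u(1) by (metis holomorphic_derivI open_ball)
  then obtain c where "\<forall>z\<in>disc. u z = c"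
    using has_field_derivative_zero_constant[of disc u] by auto
  then have "u z = 0" if "z \<in> disc" for z
    using u(2) that by force
  then have "f z = g z" for z
    using f g unfolding u_def disc_hol0_def by (cases "z \<in> disc") auto
  then show ?thesis ..
qed

definition disc_power :: "nat \<Rightarrow> complex \<Rightarrow> complex" where
  "disc_power n z = (if z \<in> disc then z ^ n else 0)"

lemma disc_power_has_field_derivative:
  "z \<in> disc \<Longrightarrow> (disc_power n has_field_derivative of_nat n * z ^ (n - 1)) (at z)"
  unfolding disc_power_def[abs_def]
  by (rule has_field_derivative_transform_within_open[where f="\<lambda>z. z ^ n" and S=disc])
     (auto intro!: derivative_eq_intros)

lemma disc_hol0_disc_power:
  assumes "n \<ge> 1"
  shows "disc_hol0 (disc_power n)"
proof -
  have "disc_power n holomorphic_on disc"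
    unfolding holomorphic_on_open[OF open_ball] using disc_power_has_field_derivative by blast
  then show ?thesis using assms by (simp add: disc_hol0_def disc_power_def)
qed

lemma bloch_weight_disc_power:
  "z \<in> disc \<Longrightarrow> bloch_weight \<alpha> (disc_power n) z = disc_weight \<alpha> z * (of_nat n * cmod z ^ (n - 1))"
  using DERIV_imp_deriv[OF disc_power_has_field_derivative]
  by (simp add: bloch_weight_eq norm_mult norm_power)

lemma disc_power_bloch0:
  assumes n: "n \<ge> 1" and \<alpha>: "0 \<le> \<alpha>"
  shows "disc_power n \<in> bloch0 \<alpha>" "0 < bloch_norm \<alpha> (disc_power n)"
proof -
  have le: "bloch_weight \<alpha> (disc_power n) z \<le> of_nat n" if z: "z \<in> disc" for z
  proof -
    have "disc_weight \<alpha> z * (of_nat n * cmod z ^ (n - 1)) \<le> 1 * (of_nat n * 1)"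
      using disc_weight_le_1[OF z \<alpha>] disc_weight_pos[OF z, of \<alpha>] z
      by (intro mult_mono mult_left_mono power_le_one) auto
    then show ?thesis using bloch_weight_disc_power[OF z] by simp
  qed
  show P: "disc_power n \<in> bloch0 \<alpha>"
    using disc_hol0_disc_power[OF n] unfolding disc_hol0_def by (blast intro: bloch0I[OF _ _ _ le])
  have half: "(1/2::complex) \<in> disc" by simp
  have "0 < bloch_weight \<alpha> (disc_power n) (1/2)"
    using bloch_weight_disc_power[OF half] disc_weight_pos[OF half, of \<alpha>] n by simp
  then show "0 < bloch_norm \<alpha> (disc_power n)"
    using bloch_weight_le_bloch_norm[OF P half] by linarith
qed

definition disc_times_z :: "(complex \<Rightarrow> complex) \<Rightarrow> complex \<Rightarrow> complex" where
  "disc_times_z H z = (if z \<in> disc then z * H z else 0)"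

lemma disc_times_z_has_field_derivative:
  assumes H: "H holomorphic_on disc" and z: "z \<in> disc"
  shows "(disc_times_z H has_field_derivative H z + z * deriv H z) (at z)"
proof -
  have "((\<lambda>z. z * H z) has_field_derivative H z + z * deriv H z) (at z)"
    using holomorphic_derivI[OF H open_ball z] by (auto intro!: derivative_eq_intros)
  then show ?thesis
    by (rule has_field_derivative_transform_within_open[OF _ open_ball z]) (simp add: disc_times_z_def)
qed

lemma disc_hol0_disc_times_z:
  assumes "H holomorphic_on disc"
  shows "disc_hol0 (disc_times_z H)"
proof -
  have "disc_times_z H holomorphic_on disc"
    unfolding holomorphic_on_open[OF open_ball]
    using disc_times_z_has_field_derivative[OF assms] by blast
  then show ?thesis by (simp add: disc_hol0_def disc_times_z_def)
qed

section \<open>Spectra of operators on the Bloch space\<close>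

lemma bounded_op_on_zero:
  assumes "bounded_op_on \<alpha> S"
  shows "S (\<lambda>z. 0) = (\<lambda>z. 0)"
proof -
  have 0: "(\<lambda>z. 0) \<in> bloch0 \<alpha>" by (rule bloch0I[where B=0]) (auto simp: bloch_weight_def)
  have "\<forall>f\<in>bloch0 \<alpha>. \<forall>g\<in>bloch0 \<alpha>. \<forall>c. S (\<lambda>z. f z + c * g z) = (\<lambda>z. S f z + c * S g z)"
    using assms unfolding bounded_op_on_def by blast
  from this[rule_format, OF 0 0, of 1]
  have "S (\<lambda>z. 0) = (\<lambda>z. S (\<lambda>z. 0) z + S (\<lambda>z. 0) z)" by simp
  then show ?thesis by (metis add_cancel_right_right)
qed

lemma eigenvalue_in_bloch_spectrum:
  assumes f: "f \<in> bloch0 \<alpha>" "f \<noteq> (\<lambda>z. 0)" and eigen: "(\<lambda>z. T f z - \<mu> * f z) = (\<lambda>z. 0)"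
  shows "\<mu> \<in> bloch_spectrum \<alpha> T"
proof -
  have False if "bounded_op_on \<alpha> S" "\<forall>f\<in>bloch0 \<alpha>. S (\<lambda>z. T f z - \<mu> * f z) = f" for S
    using that f eigen bounded_op_on_zero[OF that(1)] by auto
  then show ?thesis unfolding bloch_spectrum_def by blast
qed

lemma approx_eigenvalue_in_bloch_spectrum:
  assumes ae: "approx_eigenvalue \<alpha> T \<mu>" and T: "\<And>f. f \<in> bloch0 \<alpha> \<Longrightarrow> T f \<in> bloch0 \<alpha>"
  shows "\<mu> \<in> bloch_spectrum \<alpha> T"
proof -
  obtain x where x: "\<And>n. x n \<in> bloch0 \<alpha>" "\<And>n. bloch_norm \<alpha> (x n) = 1"
    and lim: "(\<lambda>n. bloch_norm \<alpha> (\<lambda>z. T (x n) z - \<mu> * x n z)) \<longlonglongrightarrow> 0"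
    using ae unfolding approx_eigenvalue_def by blast
  have False if S: "bounded_op_on \<alpha> S" "\<forall>f\<in>bloch0 \<alpha>. S (\<lambda>z. T f z - \<mu> * f z) = f" for S
  proof -
    obtain M where M: "\<forall>f\<in>bloch0 \<alpha>. bloch_norm \<alpha> (S f) \<le> M * bloch_norm \<alpha> f"
      using S(1) unfolding bounded_op_on_def by blast
    have "eventually (\<lambda>n. bloch_norm \<alpha> (\<lambda>z. T (x n) z - \<mu> * x n z) < 1 / (\<bar>M\<bar> + 1)) sequentially"
      using lim by (rule order_tendstoD) simp
    then obtain n where n: "bloch_norm \<alpha> (\<lambda>z. T (x n) z - \<mu> * x n z) < 1 / (\<bar>M\<bar> + 1)"
      using eventually_happens'[OF sequentially_bot] by blast
    let ?y = "bloch_norm \<alpha> (\<lambda>z. T (x n) z - \<mu> * x n z)"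
    have y: "(\<lambda>z. T (x n) z - \<mu> * x n z) \<in> bloch0 \<alpha>"
      using bloch0_lincomb[OF T[OF x(1)] x(1), where c="-\<mu>"] by simp
    have "1 = bloch_norm \<alpha> (S (\<lambda>z. T (x n) z - \<mu> * x n z))"
      using S(2) x by simp
    also have "\<dots> \<le> \<bar>M\<bar> * ?y"
      using M y bloch_norm_nonneg[OF y] by (meson abs_ge_self mult_right_mono order_trans)
    also have "\<dots> \<le> \<bar>M\<bar> * (1 / (\<bar>M\<bar> + 1))"
      using n by (intro mult_left_mono) auto
    also have "\<dots> < 1" by (simp add: field_simps)
    finally show False by simp
  qed
  then show ?thesis unfolding bloch_spectrum_def by blast
qed

lemma shifted_op_bloch0:
  assumes T: "bounded_op_on \<alpha> T" and f: "f \<in> bloch0 \<alpha>"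
  shows "(\<lambda>z. T f z - \<mu> * f z) \<in> bloch0 \<alpha>"
proof -
  have "T f \<in> bloch0 \<alpha>" using T f unfolding bounded_op_on_def by blast
  from bloch0_lincomb[OF this f, where c="-\<mu>"] show ?thesis by simp
qed

lemma shifted_op_lincomb:
  assumes T: "bounded_op_on \<alpha> T" and f: "f1 \<in> bloch0 \<alpha>" "f2 \<in> bloch0 \<alpha>"
  shows "(\<lambda>z. T (\<lambda>z. f1 z + c * f2 z) z - \<mu> * (f1 z + c * f2 z))
    = (\<lambda>z. (T f1 z - \<mu> * f1 z) + c * (T f2 z - \<mu> * f2 z))"
proof -
  have "T (\<lambda>z. f1 z + c * f2 z) = (\<lambda>z. T f1 z + c * T f2 z)"
    using T f unfolding bounded_op_on_def by blast
  then show ?thesis by (simp add: algebra_simps)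
qed

lemma shifted_op_inj:
  assumes T: "bounded_op_on \<alpha> T"
    and inj: "\<And>f. f \<in> bloch0 \<alpha> \<Longrightarrow> (\<lambda>z. T f z - \<mu> * f z) = (\<lambda>z. 0) \<Longrightarrow> f = (\<lambda>z. 0)"
    and f: "f1 \<in> bloch0 \<alpha>" "f2 \<in> bloch0 \<alpha>" and eq: "(\<lambda>z. T f1 z - \<mu> * f1 z) = (\<lambda>z. T f2 z - \<mu> * f2 z)"
  shows "f1 = f2"
proof -
  have "(\<lambda>z. T (\<lambda>z. f1 z + (-1) * f2 z) z - \<mu> * (f1 z + (-1) * f2 z)) = (\<lambda>z. 0)"
    using shifted_op_lincomb[OF T f, of "-1" \<mu>] eq by (simp add: fun_eq_iff)
  then have "(\<lambda>z. f1 z + (-1) * f2 z) = (\<lambda>z. 0)"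
    using inj[OF bloch0_lincomb[OF f]] by blast
  then have "f1 z + (-1) * f2 z = 0" for z by (rule fun_cong)
  then show ?thesis by fastforce
qed

lemma not_in_bloch_spectrumI:
  assumes T: "bounded_op_on \<alpha> T"
    and inj: "\<And>f. f \<in> bloch0 \<alpha> \<Longrightarrow> (\<lambda>z. T f z - \<mu> * f z) = (\<lambda>z. 0) \<Longrightarrow> f = (\<lambda>z. 0)"
    and surj: "\<And>u. u \<in> bloch0 \<alpha> \<Longrightarrow>
      \<exists>f\<in>bloch0 \<alpha>. (\<lambda>z. T f z - \<mu> * f z) = u \<and> bloch_norm \<alpha> f \<le> M * bloch_norm \<alpha> u"
  shows "\<mu> \<notin> bloch_spectrum \<alpha> T"
proof -
  define A where "A f = (\<lambda>z. T f z - \<mu> * f z)" for f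
  have A_lin: "A (\<lambda>z. f1 z + c * f2 z) = (\<lambda>z. A f1 z + c * A f2 z)"
    if "f1 \<in> bloch0 \<alpha>" "f2 \<in> bloch0 \<alpha>" for f1 f2 c
    unfolding A_def using shifted_op_lincomb[OF T that] by simp
  have A_inj: "f1 = f2" if "f1 \<in> bloch0 \<alpha>" "f2 \<in> bloch0 \<alpha>" "A f1 = A f2" for f1 f2
    using shifted_op_inj[OF T inj that(1,2)] that(3) unfolding A_def by blast
  have "\<forall>u. \<exists>f. u \<in> bloch0 \<alpha> \<longrightarrow> f \<in> bloch0 \<alpha> \<and> A f = u \<and> bloch_norm \<alpha> f \<le> M * bloch_norm \<alpha> u"
    using surj unfolding A_def by blast
  then obtain S where S: "\<And>u. u \<in> bloch0 \<alpha> \<Longrightarrow>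
      S u \<in> bloch0 \<alpha> \<and> A (S u) = u \<and> bloch_norm \<alpha> (S u) \<le> M * bloch_norm \<alpha> u"
    by metis
  have "bounded_op_on \<alpha> S"
    unfolding bounded_op_on_def
  proof (intro conjI ballI allI exI[where x=M])
    fix f1 f2 c assume f: "f1 \<in> bloch0 \<alpha>" "f2 \<in> bloch0 \<alpha>"
    have S12: "S f1 \<in> bloch0 \<alpha>" "S f2 \<in> bloch0 \<alpha>" using S f by blast+
    have "A (\<lambda>z. S f1 z + c * S f2 z) = (\<lambda>z. f1 z + c * f2 z)"
      using S f by (simp add: A_lin[OF S12])
    also have "\<dots> = A (S (\<lambda>z. f1 z + c * f2 z))"
      using S[OF bloch0_lincomb[OF f]] by simp
    finally have "(\<lambda>z. S f1 z + c * S f2 z) = S (\<lambda>z. f1 z + c * f2 z)"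
      using A_inj[OF bloch0_lincomb[OF S12]] S[OF bloch0_lincomb[OF f]] by blast
    then show "S (\<lambda>z. f1 z + c * f2 z) = (\<lambda>z. S f1 z + c * S f2 z)" ..
  next
    fix f assume "f \<in> bloch0 \<alpha>"
    then show "S f \<in> bloch0 \<alpha>" "bloch_norm \<alpha> (S f) \<le> M * bloch_norm \<alpha> f"
      using S by blast+
  qed
  moreover have "S (A f) = f \<and> A (S f) = f" if f: "f \<in> bloch0 \<alpha>" for f
    using S[OF shifted_op_bloch0[OF T f]] S[OF f] A_inj[OF _ f] unfolding A_def by blast
  ultimately show ?thesis
    unfolding bloch_spectrum_def A_def by auto
qed

section \<open>The generalized Alexander operator\<close>

definition divz :: "(complex \<Rightarrow> complex) \<Rightarrow> complex \<Rightarrow> complex" where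
  "divz F = (\<lambda>z. if z = 0 then deriv F 0 else F z / z)"

lemma divz_nonzero [simp]: "z \<noteq> 0 \<Longrightarrow> divz F z = F z / z"
  by (simp add: divz_def)

lemma mult_divz: "F 0 = 0 \<Longrightarrow> z * divz F z = F z"
  by (simp add: divz_def)

lemma holomorphic_on_divz:
  assumes "F holomorphic_on disc" "F 0 = 0"
  shows "divz F holomorphic_on disc"
proof -
  have "(\<lambda>z. if z = 0 then deriv F 0 else (F z - F 0) / (z - 0)) holomorphic_on disc"
    by (rule pole_lemma[OF assms(1)]) (simp add: interior_open)
  moreover have "(\<lambda>z. if z = 0 then deriv F 0 else (F z - F 0) / (z - 0)) = divz F"
    using assms(2) by (simp add: divz_def fun_eq_iff)
  ultimately show ?thesis by simp
qed

lemma norm_divz_diff_le: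
  assumes "1/2 \<le> cmod z"
  shows "cmod (divz (\<lambda>w. \<omega> w - \<omega> 0) z) \<le> 2 * (cmod (\<omega> z) + cmod (\<omega> 0))"
proof -
  have "z \<noteq> 0" using assms by auto
  then have "cmod (divz (\<lambda>w. \<omega> w - \<omega> 0) z) = cmod (\<omega> z - \<omega> 0) / cmod z"
    by (simp add: norm_divide)
  also have "\<dots> \<le> (cmod (\<omega> z) + cmod (\<omega> 0)) / (1/2)"
    using assms by (intro frac_le norm_triangle_ineq4) auto
  finally show ?thesis by simp
qed

lemma disc_weight_divz_bound_outer:
  assumes \<alpha>: "0 \<le> \<alpha>" and K: "\<And>z. z \<in> disc \<Longrightarrow> disc_weight \<alpha> z * cmod (\<omega> z) \<le> K"
    and z: "z \<in> disc" "1/2 \<le> cmod z"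
  shows "disc_weight \<alpha> z * cmod (divz (\<lambda>w. \<omega> w - \<omega> 0) z) \<le> 4 * K"
proof -
  have W: "0 < disc_weight \<alpha> z" "disc_weight \<alpha> z \<le> 1"
    using disc_weight_pos[OF z(1)] disc_weight_le_1[OF z(1) \<alpha>] by auto
  have "disc_weight \<alpha> z * cmod (divz (\<lambda>w. \<omega> w - \<omega> 0) z)
      \<le> 2 * (disc_weight \<alpha> z * cmod (\<omega> z)) + 2 * (disc_weight \<alpha> z * cmod (\<omega> 0))"
    using mult_left_mono[OF norm_divz_diff_le[OF z(2), of \<omega>], of "disc_weight \<alpha> z"] W
    by (simp add: algebra_simps)
  also have "\<dots> \<le> 2 * K + 2 * (1 * K)"
    using K[OF z(1)] K[of 0] W by (intro add_mono mult_left_mono mult_mono) auto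
  finally show ?thesis by simp
qed

lemma norm_divz_bound_inner:
  assumes \<omega>: "\<omega> holomorphic_on disc" and \<alpha>: "0 \<le> \<alpha>"
    and K: "\<And>z. z \<in> disc \<Longrightarrow> disc_weight \<alpha> z * cmod (\<omega> z) \<le> K" and z: "cmod z \<le> 1/2"
  shows "cmod (divz (\<lambda>w. \<omega> w - \<omega> 0) z) \<le> 4 / disc_weight \<alpha> (1/2) * K"
proof -
  let ?q = "divz (\<lambda>w. \<omega> w - \<omega> 0)"
  let ?W = "disc_weight \<alpha> (1/2)"
  have W: "0 < ?W" "?W \<le> 1" using disc_weight_pos[of "1/2"] disc_weight_le_1[of "1/2"] \<alpha> by auto
  have K0: "cmod (\<omega> 0) \<le> K" using K[of 0] by simp
  then have "K \<le> K / ?W" using W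
    by (simp add: field_simps mult_right_le_one_le order_trans[OF norm_ge_zero])
  have "(\<lambda>w. \<omega> w - \<omega> 0) holomorphic_on disc" using \<omega> by (intro holomorphic_intros)
  then have q: "?q holomorphic_on disc" by (rule holomorphic_on_divz) simp
  have hol: "?q holomorphic_on interior (cball 0 (1/2))"
    using q by (rule holomorphic_on_subset) auto
  have cont: "continuous_on (closure (cball 0 (1/2))) ?q"
    using holomorphic_on_imp_continuous_on[OF q] by (rule continuous_on_subset) auto
  have frontier: "cmod (?q \<zeta>) \<le> 4 / ?W * K" if "\<zeta> \<in> frontier (cball 0 (1/2))" for \<zeta>
  proof -
    from that have \<zeta>: "cmod \<zeta> = 1/2" by simp
    then have "\<zeta> \<in> disc" by simp
    have "disc_weight \<alpha> \<zeta> = ?W" unfolding disc_weight_def \<zeta> by simp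
    then have "cmod (\<omega> \<zeta>) \<le> K / ?W" using K[OF \<open>\<zeta> \<in> disc\<close>] W by (simp add: field_simps)
    then have "cmod (?q \<zeta>) \<le> 2 * (K / ?W + K / ?W)"
      using norm_divz_diff_le[of \<zeta> \<omega>] \<zeta> K0 \<open>K \<le> K / ?W\<close> by simp
    then show ?thesis by simp
  qed
  have "z \<in> cball 0 (1/2)" using z by simp
  from maximum_modulus_frontier[OF hol cont bounded_cball frontier this] show ?thesis .
qed

lemma disc_weight_divz_bound:
  assumes \<omega>: "\<omega> holomorphic_on disc" and \<alpha>: "0 \<le> \<alpha>"
    and K: "\<And>z. z \<in> disc \<Longrightarrow> disc_weight \<alpha> z * cmod (\<omega> z) \<le> K" and z: "z \<in> disc"
  shows "disc_weight \<alpha> z * cmod (divz (\<lambda>w. \<omega> w - \<omega> 0) z) \<le> 4 / disc_weight \<alpha> (1/2) * K"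
proof (cases "1/2 \<le> cmod z")
  case True
  have W: "0 < disc_weight \<alpha> (1/2)" "disc_weight \<alpha> (1/2) \<le> 1"
    using disc_weight_pos[of "1/2"] disc_weight_le_1[of "1/2"] \<alpha> by auto
  have "0 \<le> K" using K[of 0] by (simp add: order_trans[OF norm_ge_zero])
  then have "4 * K \<le> 4 / disc_weight \<alpha> (1/2) * K"
    using W by (simp add: field_simps mult_right_le_one_le)
  with disc_weight_divz_bound_outer[OF \<alpha> K z True] show ?thesis by linarith
next
  case False
  have "disc_weight \<alpha> z * cmod (divz (\<lambda>w. \<omega> w - \<omega> 0) z) \<le> cmod (divz (\<lambda>w. \<omega> w - \<omega> 0) z)"
    using disc_weight_le_1[OF z \<alpha>] disc_weight_pos[OF z, of \<alpha>] by (intro mult_left_le_one_le) auto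
  moreover have "cmod (divz (\<lambda>w. \<omega> w - \<omega> 0) z) \<le> 4 / disc_weight \<alpha> (1/2) * K"
    using False by (intro norm_divz_bound_inner[OF \<omega> \<alpha>, where K=K]) (use K in auto)
  ultimately show ?thesis by linarith
qed

lemma contour_integral_linepath_0_has_field_derivative:
  assumes Q: "Q holomorphic_on S" and S: "open S" "convex S" "0 \<in> S" and z: "z \<in> S"
  shows "((\<lambda>z. contour_integral (linepath 0 z) Q) has_field_derivative Q z) (at z)"
proof (rule triangle_contour_integrals_starlike_primitive[OF _ S(3) S(1) z])
  show "continuous_on S Q" using Q by (rule holomorphic_on_imp_continuous_on)
  show "closed_segment 0 y \<subseteq> S" if "y \<in> S" for y
    using S(2,3) that by (simp add: closed_segment_subset)
  fix b c assume "closed_segment b c \<subseteq> S"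
  then have "{0, b, c} \<subseteq> S" using S(3) by auto
  then have "convex hull {0, b, c} \<subseteq> S"
    using S(2) by (rule hull_minimal)
  then have "Q holomorphic_on convex hull {0, b, c}"
    using Q holomorphic_on_subset by blast
  then have "(Q has_contour_integral 0) (linepath 0 b +++ linepath b c +++ linepath c 0)"
    by (rule Cauchy_theorem_triangle)
  then show "contour_integral (linepath 0 b) Q + contour_integral (linepath b c) Q +
       contour_integral (linepath c 0) Q = 0"
    by (rule has_chain_integral_chain_integral3)
qed

lemma contour_integral_linepath_0_cong:
  assumes Q: "continuous_on (closed_segment 0 z) Q" and eq: "\<And>w. w \<noteq> 0 \<Longrightarrow> P w = Q w"
  shows "contour_integral (linepath 0 z) P = contour_integral (linepath 0 z) Q"
proof (cases "z = 0")
  case False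
  obtain i where i: "(Q has_contour_integral i) (linepath 0 z)"
    using contour_integrable_continuous_linepath[OF Q] by (auto simp: contour_integrable_on_def)
  have "linepath 0 z t \<noteq> 0" if "t \<in> {0..1} - {0}" for t
    using that False by (simp add: linepath_def scaleR_conv_of_real)
  then have "(P has_contour_integral i) (linepath 0 z)"
    using i eq unfolding has_contour_integral_def
    by (subst has_integral_spike_eq[where S="{0}"]) auto
  then show ?thesis using i by (simp add: contour_integral_unique)
qed simp

lemma alexander_op_has_field_derivative:
  assumes f: "f holomorphic_on disc" "f 0 = 0" and g: "g holomorphic_on disc" and z: "z \<in> disc"
  shows "(alexander_op g f has_field_derivative divz (\<lambda>w. f w * g w) z) (at z)"
proof -
  let ?q = "divz (\<lambda>w. f w * g w)"
  have "(\<lambda>w. f w * g w) holomorphic_on disc" using f g by (intro holomorphic_intros)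
  then have q: "?q holomorphic_on disc"
    by (rule holomorphic_on_divz) (simp add: f(2))
  have eq: "contour_integral (linepath 0 w) ?q = alexander_op g f w" if w: "w \<in> disc" for w
  proof -
    have "closed_segment 0 w \<subseteq> disc" using w by (simp add: closed_segment_subset)
    then have "continuous_on (closed_segment 0 w) ?q"
      using q holomorphic_on_imp_continuous_on holomorphic_on_subset by blast
    then have "contour_integral (linepath 0 w) (\<lambda>w. f w * g w / w) = contour_integral (linepath 0 w) ?q"
      by (rule contour_integral_linepath_0_cong) simp
    then show ?thesis unfolding alexander_op_def using w by simp
  qed
  show ?thesis
    by (rule has_field_derivative_transform_within_open[OF
          contour_integral_linepath_0_has_field_derivative[OF q open_ball convex_ball _ z] open_ball z eq])
       simp_all
qed

lemma disc_hol0_alexander_op: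
  assumes f: "disc_hol0 f" and g: "g holomorphic_on disc"
  shows "disc_hol0 (alexander_op g f)"
proof -
  have "alexander_op g f holomorphic_on disc"
    unfolding holomorphic_on_open[OF open_ball]
    using alexander_op_has_field_derivative[of f g] f g unfolding disc_hol0_def by blast
  moreover have "alexander_op g f 0 = 0" "\<And>z. z \<notin> disc \<Longrightarrow> alexander_op g f z = 0"
    by (simp_all add: alexander_op_def)
  ultimately show ?thesis by (simp add: disc_hol0_def)
qed

lemma deriv_alexander_op:
  assumes f: "disc_hol0 f" and g: "g holomorphic_on disc" and z: "z \<in> disc" "z \<noteq> 0"
  shows "deriv (alexander_op g f) z = f z * g z / z"
  using alexander_op_has_field_derivative[of f g z] assms
  by (simp add: disc_hol0_def DERIV_imp_deriv)

lemma alexander_op_bloch0: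
  assumes f: "f \<in> bloch0 \<alpha>" and g: "g holomorphic_on disc"
    and G: "\<And>z. z \<in> disc \<Longrightarrow> cmod (g z) \<le> G" and \<alpha>: "0 \<le> \<alpha>"
  shows "alexander_op g f \<in> bloch0 \<alpha>" "bloch_norm \<alpha> (alexander_op g f) \<le> G * bloch_norm \<alpha> f"
proof -
  let ?N = "bloch_norm \<alpha> f"
  have Cf: "disc_hol0 (alexander_op g f)"
    using disc_hol0_alexander_op[OF bloch0_imp_disc_hol0[OF f] g] .
  have "bloch_weight \<alpha> (alexander_op g f) z \<le> G * ?N" if z: "z \<in> disc" "z \<noteq> 0" for z
  proof -
    have "bloch_weight \<alpha> (alexander_op g f) z = (disc_weight \<alpha> z * cmod (f z)) * cmod (g z) / cmod z"
      using deriv_alexander_op[OF bloch0_imp_disc_hol0[OF f] g z]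
      by (simp add: bloch_weight_eq norm_mult norm_divide)
    also have "\<dots> \<le> (cmod z * ?N) * cmod (g z) / cmod z"
      by (intro divide_right_mono mult_right_mono bloch0_growth[OF f z(1) \<alpha>]) auto
    also have "\<dots> = cmod (g z) * ?N" using z by simp
    also have "\<dots> \<le> G * ?N" using G[OF z(1)] bloch_norm_nonneg[OF f] by (rule mult_right_mono)
    finally show ?thesis .
  qed
  then have "bloch_weight \<alpha> (alexander_op g f) z \<le> G * ?N" if "z \<in> disc" for z
    using Cf that unfolding disc_hol0_def by (blast intro: bloch_weight_le_at_0)
  then show "alexander_op g f \<in> bloch0 \<alpha>" "bloch_norm \<alpha> (alexander_op g f) \<le> G * ?N"
    using Cf unfolding disc_hol0_def by (auto intro: bloch0I[where B="G * ?N"] bloch_norm_le)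
qed

lemma alexander_op_lincomb:
  assumes f1: "disc_hol0 f1" and f2: "disc_hol0 f2" and g: "g holomorphic_on disc"
  shows "alexander_op g (\<lambda>z. f1 z + c * f2 z) = (\<lambda>z. alexander_op g f1 z + c * alexander_op g f2 z)"
proof (rule disc_hol0_eqI)
  have f: "disc_hol0 (\<lambda>z. f1 z + c * f2 z)" using f1 f2 by (rule disc_hol0_lincomb)
  note C1 = disc_hol0_alexander_op[OF f1 g] and C2 = disc_hol0_alexander_op[OF f2 g]
  show "disc_hol0 (alexander_op g (\<lambda>z. f1 z + c * f2 z))" using disc_hol0_alexander_op[OF f g] .
  show "disc_hol0 (\<lambda>z. alexander_op g f1 z + c * alexander_op g f2 z)" using C1 C2
    by (rule disc_hol0_lincomb)
  fix z assume z: "z \<in> disc" "z \<noteq> 0"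
  have "deriv (\<lambda>z. alexander_op g f1 z + c * alexander_op g f2 z) z
      = f1 z * g z / z + c * (f2 z * g z / z)"
    using C1 C2 z
    by (simp add: disc_hol0_def deriv_lincomb deriv_alexander_op[OF f1 g] deriv_alexander_op[OF f2 g])
  also have "\<dots> = deriv (alexander_op g (\<lambda>z. f1 z + c * f2 z)) z"
    using z by (simp add: deriv_alexander_op[OF f g] field_simps)
  finally show "deriv (alexander_op g (\<lambda>z. f1 z + c * f2 z)) z =
      deriv (\<lambda>z. alexander_op g f1 z + c * alexander_op g f2 z) z" by simp
qed

lemma bounded_op_on_alexander_op:
  assumes g: "g holomorphic_on disc" and G: "\<And>z. z \<in> disc \<Longrightarrow> cmod (g z) \<le> G" and \<alpha>: "0 \<le> \<alpha>"
  shows "bounded_op_on \<alpha> (alexander_op g)"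
  unfolding bounded_op_on_def
  using alexander_op_bloch0[OF _ g G \<alpha>]
    alexander_op_lincomb[OF bloch0_imp_disc_hol0 bloch0_imp_disc_hol0 g]
  by blast

lemma alexander_op_scale:
  assumes f: "disc_hol0 f" and g: "g holomorphic_on disc"
  shows "alexander_op g (\<lambda>z. c * f z) = (\<lambda>z. c * alexander_op g f z)"
proof -
  have "disc_hol0 (\<lambda>z. 0)" by (simp add: disc_hol0_def)
  from alexander_op_lincomb[OF this f g, of c]
  have "alexander_op g (\<lambda>z. c * f z) = (\<lambda>z. alexander_op g (\<lambda>z. 0) z + c * alexander_op g f z)"
    by simp
  moreover have "alexander_op g (\<lambda>z. 0) = (\<lambda>z. 0)" by (simp add: alexander_op_def fun_eq_iff)
  ultimately show ?thesis by simp
qed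

lemma alexander_op_disc_power_bound:
  assumes n: "n \<ge> 1" and \<alpha>: "0 \<le> \<alpha>" and g: "g holomorphic_on disc"
    and G: "\<And>z. z \<in> disc \<Longrightarrow> cmod (g z) \<le> G"
  shows "bloch_norm \<alpha> (alexander_op g (disc_power n)) \<le> G * bloch_norm \<alpha> (disc_power n) / of_nat n"
proof -
  have P: "disc_hol0 (disc_power n)" using disc_hol0_disc_power[OF n] .
  have "cmod (g 0) \<le> G" using G by simp
  then have "0 \<le> G" by (meson norm_ge_zero order_trans)
  have "bloch_weight \<alpha> (alexander_op g (disc_power n)) z \<le> G * bloch_norm \<alpha> (disc_power n) / of_nat n"
    if z: "z \<in> disc" "z \<noteq> 0" for z
  proof -
    have "deriv (alexander_op g (disc_power n)) z = z ^ (n - 1) * g z"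
      using deriv_alexander_op[OF P g z] z n by (simp add: disc_power_def power_eq_if)
    then have "bloch_weight \<alpha> (alexander_op g (disc_power n)) z
        = disc_weight \<alpha> z * (cmod z ^ (n - 1) * cmod (g z))"
      by (simp add: bloch_weight_eq norm_mult norm_power)
    also have "\<dots> \<le> disc_weight \<alpha> z * (cmod z ^ (n - 1) * G)"
      using disc_weight_pos[OF z(1), of \<alpha>] G[OF z(1)] by (intro mult_left_mono) auto
    also have "\<dots> = G * bloch_weight \<alpha> (disc_power n) z / of_nat n"
      using bloch_weight_disc_power[OF z(1)] n by simp
    also have "\<dots> \<le> G * bloch_norm \<alpha> (disc_power n) / of_nat n"
      using bloch_weight_le_bloch_norm[OF disc_power_bloch0(1)[OF n \<alpha>] z(1)] \<open>0 \<le> G\<close>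
      by (intro divide_right_mono mult_left_mono) auto
    finally show ?thesis .
  qed
  moreover have "alexander_op g (disc_power n) holomorphic_on disc"
    using disc_hol0_alexander_op[OF P g] by (simp add: disc_hol0_def)
  ultimately show ?thesis
    by (intro bloch_norm_le) (rule bloch_weight_le_at_0)
qed

lemma approx_eigenvalue_alexander_op_0:
  assumes \<alpha>: "0 \<le> \<alpha>" and g: "g holomorphic_on disc" and G: "\<And>z. z \<in> disc \<Longrightarrow> cmod (g z) \<le> G"
  shows "approx_eigenvalue \<alpha> (alexander_op g) 0"
proof -
  define N where "N n = bloch_norm \<alpha> (disc_power (Suc n))" for n
  define c where "c n = complex_of_real (1 / N n)" for n
  define x where "x n z = c n * disc_power (Suc n) z" for n z
  have N: "0 < N n" for n
    unfolding N_def using disc_power_bloch0(2)[of "Suc n" \<alpha>] \<alpha> by simp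
  then have c: "cmod (c n) = 1 / N n" for n
    unfolding c_def by (simp add: norm_divide order_less_imp_le)
  have P: "disc_power (Suc n) \<in> bloch0 \<alpha>" for n
    using disc_power_bloch0(1)[of "Suc n" \<alpha>] \<alpha> by simp
  have x: "x n \<in> bloch0 \<alpha>" "bloch_norm \<alpha> (x n) = 1" for n
    using bloch0_scale[OF P, of "c n"] N[of n] unfolding x_def[abs_def] c N_def by simp_all
  have le: "bloch_norm \<alpha> (\<lambda>z. alexander_op g (x n) z - 0 * x n z) \<le> G / real (Suc n)" for n
  proof -
    have "alexander_op g (x n) = (\<lambda>z. c n * alexander_op g (disc_power (Suc n)) z)"
      unfolding x_def by (rule alexander_op_scale[OF disc_hol0_disc_power g]) simp
    then have "bloch_norm \<alpha> (\<lambda>z. alexander_op g (x n) z - 0 * x n z)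
        = (1 / N n) * bloch_norm \<alpha> (alexander_op g (disc_power (Suc n)))"
      using bloch0_scale(2)[OF alexander_op_bloch0(1)[OF P g G \<alpha>]] c by simp
    also have "\<dots> \<le> (1 / N n) * (G * N n / real (Suc n))"
      using alexander_op_disc_power_bound[of "Suc n" \<alpha> g G] \<alpha> g G N[of n] unfolding N_def
      by (intro mult_left_mono) auto
    also have "\<dots> = G / real (Suc n)" using N[of n] by simp
    finally show ?thesis .
  qed
  have nonneg: "0 \<le> bloch_norm \<alpha> (\<lambda>z. alexander_op g (x n) z - 0 * x n z)" for n
    using bloch_norm_nonneg[OF alexander_op_bloch0(1)[OF x(1) g G \<alpha>]] by simp
  have "(\<lambda>n. G / real (Suc n)) \<longlonglongrightarrow> 0"
    using LIMSEQ_Suc[OF lim_const_over_n[of G]] by simp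
  from tendsto_sandwich[OF _ _ tendsto_const this]
  have "(\<lambda>n. bloch_norm \<alpha> (\<lambda>z. alexander_op g (x n) z - 0 * x n z)) \<longlonglongrightarrow> 0"
    using nonneg le by auto
  then show ?thesis unfolding approx_eigenvalue_def using x by blast
qed

section \<open>The integrating factor\<close>

definition alexander_exponent :: "(complex \<Rightarrow> complex) \<Rightarrow> complex \<Rightarrow> complex" where
  "alexander_exponent g z = contour_integral (linepath 0 z) (divz (\<lambda>w. g w - g 0))"

definition alexander_factor :: "(complex \<Rightarrow> complex) \<Rightarrow> complex \<Rightarrow> complex \<Rightarrow> complex" where
  "alexander_factor g \<beta> z = exp (\<beta> * alexander_exponent g z)"

lemma norm_divz_diff_bound:
  assumes g: "g holomorphic_on disc" and G: "\<And>z. z \<in> disc \<Longrightarrow> cmod (g z) \<le> G" and z: "z \<in> disc"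
  shows "cmod (divz (\<lambda>w. g w - g 0) z) \<le> 4 * G"
  using disc_weight_divz_bound[OF g order_refl _ z, of G] G disc_weight_exponent_0 z by simp

lemma alexander_exponent_has_field_derivative:
  assumes g: "g holomorphic_on disc" and z: "z \<in> disc"
  shows "(alexander_exponent g has_field_derivative divz (\<lambda>w. g w - g 0) z) (at z)"
proof -
  have "(\<lambda>w. g w - g 0) holomorphic_on disc" using g by (intro holomorphic_intros)
  then have "divz (\<lambda>w. g w - g 0) holomorphic_on disc" by (rule holomorphic_on_divz) simp
  from contour_integral_linepath_0_has_field_derivative[OF this open_ball convex_ball _ z]
  show ?thesis unfolding alexander_exponent_def[abs_def] by simp
qed

lemma norm_alexander_exponent_le:
  assumes g: "g holomorphic_on disc" and G: "\<And>z. z \<in> disc \<Longrightarrow> cmod (g z) \<le> G" and z: "z \<in> disc"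
  shows "cmod (alexander_exponent g z) \<le> 4 * G"
proof -
  have "cmod (alexander_exponent g z - alexander_exponent g 0) \<le> 4 * G * cmod (z - 0)"
  proof (rule field_differentiable_bound[OF convex_ball])
    fix w assume w: "w \<in> disc"
    show "(alexander_exponent g has_field_derivative divz (\<lambda>w. g w - g 0) w) (at w within disc)"
      using alexander_exponent_has_field_derivative[OF g w] by (rule has_field_derivative_at_within)
    show "cmod (divz (\<lambda>w. g w - g 0) w) \<le> 4 * G" by (rule norm_divz_diff_bound[OF g G w])
  qed (use z in simp_all)
  moreover have "0 \<le> G" using G[of 0] by (meson centre_in_ball norm_ge_zero order_trans zero_less_one)
  then have "4 * G * cmod z \<le> 4 * G" using z by (intro mult_right_le_one_le) auto
  ultimately show ?thesis by (simp add: alexander_exponent_def)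
qed

lemma alexander_factor_has_field_derivative:
  assumes g: "g holomorphic_on disc" and z: "z \<in> disc"
  shows "(alexander_factor g \<beta> has_field_derivative
           \<beta> * divz (\<lambda>w. g w - g 0) z * alexander_factor g \<beta> z) (at z)"
  unfolding alexander_factor_def[abs_def]
  using alexander_exponent_has_field_derivative[OF g z] by (auto intro!: derivative_eq_intros)

lemma holomorphic_on_alexander_factor:
  assumes "g holomorphic_on disc"
  shows "alexander_factor g \<beta> holomorphic_on disc"
  unfolding holomorphic_on_open[OF open_ball]
  using alexander_factor_has_field_derivative[OF assms] by blast

lemma alexander_factor_nonzero: "alexander_factor g \<beta> z \<noteq> 0"
  by (simp add: alexander_factor_def)

lemma alexander_factor_bounds:
  assumes g: "g holomorphic_on disc" and G: "\<And>z. z \<in> disc \<Longrightarrow> cmod (g z) \<le> G"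
  obtains B where "\<And>z. z \<in> disc \<Longrightarrow> cmod (alexander_factor g \<beta> z) \<le> B"
    "\<And>z. z \<in> disc \<Longrightarrow> cmod (deriv (alexander_factor g \<beta>) z) \<le> B"
    "\<And>z. z \<in> disc \<Longrightarrow> cmod (1 / alexander_factor g \<beta> z) \<le> B"
proof -
  define K where "K = exp (cmod \<beta> * (4 * G))"
  have "0 \<le> G" using G[of 0] by (meson centre_in_ball norm_ge_zero order_trans zero_less_one)
  have exp_le: "cmod (exp (c * (\<beta> * alexander_exponent g z))) \<le> K"
    if z: "z \<in> disc" and c: "cmod c = 1" for z c
  proof -
    have "Re (c * (\<beta> * alexander_exponent g z)) \<le> cmod (c * (\<beta> * alexander_exponent g z))"
      by (rule complex_Re_le_cmod)
    also have "\<dots> \<le> cmod \<beta> * (4 * G)"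
      using norm_alexander_exponent_le[OF g G z] c by (simp add: norm_mult mult_left_mono)
    finally show ?thesis by (simp add: K_def)
  qed
  have E: "cmod (alexander_factor g \<beta> z) \<le> K" "cmod (1 / alexander_factor g \<beta> z) \<le> K"
    if z: "z \<in> disc" for z
    using exp_le[OF z, of 1] exp_le[OF z, of "-1"]
    by (simp_all add: alexander_factor_def exp_minus divide_inverse)
  have "cmod (deriv (alexander_factor g \<beta>) z) \<le> cmod \<beta> * (4 * G) * K" if z: "z \<in> disc" for z
  proof -
    have "cmod (deriv (alexander_factor g \<beta>) z)
        = cmod \<beta> * cmod (divz (\<lambda>w. g w - g 0) z) * cmod (alexander_factor g \<beta> z)"
      using DERIV_imp_deriv[OF alexander_factor_has_field_derivative[OF g z]] by (simp add: norm_mult)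
    also have "\<dots> \<le> cmod \<beta> * (4 * G) * K"
      using norm_divz_diff_bound[OF g G z] E(1)[OF z] \<open>0 \<le> G\<close>
      by (intro mult_mono mult_left_mono) auto
    finally show ?thesis .
  qed
  then show ?thesis
    using E by (intro that[of "max K (cmod \<beta> * (4 * G) * K)"])
      (auto intro: max.coboundedI1 max.coboundedI2)
qed

lemma alexander_factor_multiplier:
  assumes g: "g holomorphic_on disc" and G: "\<And>z. z \<in> disc \<Longrightarrow> cmod (g z) \<le> G"
    and F: "F \<in> bloch0 \<alpha>" and \<alpha>: "0 \<le> \<alpha>"
  obtains M where "(\<lambda>z. alexander_factor g \<beta> z * F z) \<in> bloch0 \<alpha>"
    "bloch_norm \<alpha> (\<lambda>z. alexander_factor g \<beta> z * F z) \<le> M * bloch_norm \<alpha> F"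
  using alexander_factor_bounds[OF g G, of \<beta>]
    bloch0_multiplier[OF F \<alpha> holomorphic_on_alexander_factor[OF g]] by metis

lemma disc_hol0_alexander_op_minus:
  assumes "disc_hol0 f" "g holomorphic_on disc"
  shows "disc_hol0 (\<lambda>z. alexander_op g f z - \<mu> * f z)"
  using disc_hol0_lincomb[OF disc_hol0_alexander_op[OF assms] assms(1), of "-\<mu>"] by simp

lemma deriv_alexander_op_minus_factor:
  assumes g: "g holomorphic_on disc" and \<mu>: "\<mu> \<noteq> 0"
    and F: "F holomorphic_on disc" "F 0 = 0" and z: "z \<in> disc" "z \<noteq> 0"
  defines "E \<equiv> alexander_factor g (1 / \<mu>)"
  shows "deriv (\<lambda>z. alexander_op g (\<lambda>w. E w * F w) z - \<mu> * (E z * F z)) z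
           = E z * (g 0 * F z - \<mu> * z * deriv F z) / z"
proof -
  have E: "(E has_field_derivative 1 / \<mu> * ((g z - g 0) / z) * E z) (at z)"
    using alexander_factor_has_field_derivative[OF g z(1), where \<beta>="1 / \<mu>"] z(2)
    by (simp add: E_def)
  have "(F has_field_derivative deriv F z) (at z)"
    using F(1) z(1) by (intro holomorphic_derivI[OF F(1)]) auto
  from DERIV_mult[OF E this]
  have EF: "((\<lambda>w. E w * F w) has_field_derivative
      1 / \<mu> * ((g z - g 0) / z) * E z * F z + E z * deriv F z) (at z)"
    by (simp add: algebra_simps)
  have "(\<lambda>w. E w * F w) holomorphic_on disc"
    using F(1) holomorphic_on_alexander_factor[OF g] unfolding E_def by (intro holomorphic_intros)
  from alexander_op_has_field_derivative[OF this _ g z(1)]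
  have "(alexander_op g (\<lambda>w. E w * F w) has_field_derivative E z * F z * g z / z) (at z)"
    using F(2) z(2) by simp
  from DERIV_diff[OF this DERIV_cmult[OF EF, of \<mu>]] DERIV_imp_deriv
  have "deriv (\<lambda>z. alexander_op g (\<lambda>w. E w * F w) z - \<mu> * (E z * F z)) z
      = E z * F z * g z / z - \<mu> * (1 / \<mu> * ((g z - g 0) / z) * E z * F z + E z * deriv F z)"
    by blast
  also have "\<dots> = E z * (g 0 * F z - \<mu> * z * deriv F z) / z"
    using \<mu> z(2) by (simp add: field_simps)
  finally show ?thesis .
qed

lemma alexander_op_eigenfunction:
  assumes g: "g holomorphic_on disc" and G: "\<And>z. z \<in> disc \<Longrightarrow> cmod (g z) \<le> G"
    and \<alpha>: "0 \<le> \<alpha>" and n: "n \<ge> 1" and g0: "g 0 \<noteq> 0"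
  defines "\<mu> \<equiv> g 0 / of_nat n"
  defines "f \<equiv> \<lambda>z. alexander_factor g (1 / \<mu>) z * disc_power n z"
  shows "f \<in> bloch0 \<alpha>" "f \<noteq> (\<lambda>z. 0)" "(\<lambda>z. alexander_op g f z - \<mu> * f z) = (\<lambda>z. 0)"
proof -
  have \<mu>: "\<mu> \<noteq> 0" using g0 n by (simp add: \<mu>_def)
  show f: "f \<in> bloch0 \<alpha>"
    using alexander_factor_multiplier[OF g G disc_power_bloch0(1)[OF n \<alpha>] \<alpha>] unfolding f_def by metis
  have "f (1/2) \<noteq> 0" by (simp add: f_def disc_power_def alexander_factor_nonzero)
  then show "f \<noteq> (\<lambda>z. 0)" by auto
  show "(\<lambda>z. alexander_op g f z - \<mu> * f z) = (\<lambda>z. 0)"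
  proof (rule disc_hol0_eqI)
    show "disc_hol0 (\<lambda>z. alexander_op g f z - \<mu> * f z)"
      by (rule disc_hol0_alexander_op_minus[OF bloch0_imp_disc_hol0[OF f] g])
    fix z assume z: "z \<in> disc" "z \<noteq> 0"
    have P: "disc_power n holomorphic_on disc" "disc_power n 0 = 0"
      using disc_hol0_disc_power[OF n] by (auto simp: disc_hol0_def)
    have "disc_power n z = z ^ n" using z(1) by (simp add: disc_power_def)
    moreover have "deriv (disc_power n) z = of_nat n * z ^ (n - 1)"
      using disc_power_has_field_derivative[OF z(1)] by (rule DERIV_imp_deriv)
    ultimately have "deriv (\<lambda>z. alexander_op g f z - \<mu> * f z) z
        = alexander_factor g (1 / \<mu>) z * (g 0 * z ^ n - \<mu> * z * (of_nat n * z ^ (n - 1))) / z"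
      using deriv_alexander_op_minus_factor[OF g \<mu> P z] unfolding f_def by simp
    also have "\<dots> = 0"
      using n by (simp add: \<mu>_def power_eq_if)
    finally show "deriv (\<lambda>z. alexander_op g f z - \<mu> * f z) z = deriv (\<lambda>z. 0) z" by simp
  qed (simp add: disc_hol0_def)
qed

section \<open>The Euler equation\<close>

lemma of_real_mult_in_disc: "x \<in> disc \<Longrightarrow> t \<in> {0..1} \<Longrightarrow> of_real t * x \<in> disc"
  using mult_left_le_one_le[of "cmod x" t] by (auto simp: norm_mult)

lemma powr_diff_one_mult_self: "(w::complex) powr (s - 1) * w = w powr s"
proof (cases "w = 0")
  case False
  then have "w powr ((s - 1) + 1) = w powr (s - 1) * w"
    by (simp only: powr_add) (simp add: powr_def)
  then show ?thesis by simp
qed simp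

definition euler_integrand :: "complex \<Rightarrow> (complex \<Rightarrow> complex) \<Rightarrow> complex \<Rightarrow> real \<Rightarrow> complex" where
  "euler_integrand s \<omega> x t = of_real t powr (s - 1) * \<omega> (of_real t * x)"

definition euler_integral :: "complex \<Rightarrow> (complex \<Rightarrow> complex) \<Rightarrow> complex \<Rightarrow> complex" where
  "euler_integral s \<omega> x = integral {0..1} (euler_integrand s \<omega> x)"

lemma continuous_on_euler_integrand:
  assumes s: "1 < Re s" and \<omega>: "continuous_on disc \<omega>"
  shows "continuous_on (disc \<times> {0..1}) (\<lambda>(x, t). euler_integrand s \<omega> x t)"
proof -
  have "continuous_on (disc \<times> {0..1}) (\<lambda>p. complex_of_real (snd p) powr (s - 1))"
    using s by (intro continuous_intros) auto
  moreover have "continuous_on (disc \<times> {0..1}) (\<lambda>p. \<omega> (of_real (snd p) * fst p))"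
    by (rule continuous_on_compose2[OF \<omega>]) (intro continuous_intros, auto intro: of_real_mult_in_disc)
  ultimately show ?thesis
    unfolding euler_integrand_def split_beta by (rule continuous_on_mult)
qed

lemma continuous_on_euler_integrand_at:
  assumes s: "1 < Re s" and \<omega>: "continuous_on disc \<omega>" and x: "x \<in> disc"
  shows "continuous_on {0..1} (euler_integrand s \<omega> x)"
proof -
  have "continuous_on {0..1} (\<lambda>t. (\<lambda>(x, t). euler_integrand s \<omega> x t) (Pair x t))"
    by (rule continuous_on_compose2[OF continuous_on_euler_integrand[OF s \<omega>]])
       (intro continuous_intros, use x in auto)
  then show ?thesis by simp
qed

lemma euler_integral_has_field_derivative:
  assumes s: "1 < Re s" and \<omega>: "\<omega> holomorphic_on disc" and x: "x \<in> disc"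
  shows "(euler_integral s \<omega> has_field_derivative euler_integral (s + 1) (deriv \<omega>) x) (at x)"
proof -
  have "continuous_on disc (deriv \<omega>)"
    using \<omega> by (intro holomorphic_on_imp_continuous_on holomorphic_deriv) auto
  from continuous_on_euler_integrand[OF _ this] s
  have cont: "continuous_on (disc \<times> cbox 0 1) (\<lambda>(x, t). euler_integrand (s + 1) (deriv \<omega>) x t)"
    by simp
  have D: "((\<lambda>x. euler_integrand s \<omega> x t) has_field_derivative euler_integrand (s + 1) (deriv \<omega>) x t)
      (at x within disc)" if x: "x \<in> disc" and t: "t \<in> cbox 0 1" for x t
  proof -
    have "(\<omega> has_field_derivative deriv \<omega> (of_real t * x)) (at (of_real t * x))"
      using \<omega> of_real_mult_in_disc[OF x] t by (intro holomorphic_derivI[OF \<omega>]) auto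
    then have "((\<lambda>x. \<omega> (of_real t * x)) has_field_derivative deriv \<omega> (of_real t * x) * of_real t)
        (at x)"
      using DERIV_chain2[of \<omega> _ "\<lambda>x. of_real t * x"] by (auto intro!: derivative_eq_intros)
    from DERIV_cmult[OF this, of "of_real t powr (s - 1)"]
    have "((\<lambda>x. euler_integrand s \<omega> x t) has_field_derivative
        of_real t powr (s - 1) * (deriv \<omega> (of_real t * x) * of_real t)) (at x)"
      unfolding euler_integrand_def .
    moreover have "of_real t powr (s - 1) * (deriv \<omega> (of_real t * x) * of_real t)
        = euler_integrand (s + 1) (deriv \<omega>) x t"
      using powr_diff_one_mult_self[of "of_real t" s] by (simp add: euler_integrand_def ac_simps)
    ultimately show ?thesis by (simp add: has_field_derivative_at_within)
  qed
  have "euler_integrand s \<omega> x integrable_on cbox 0 1" if "x \<in> disc" for x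
    using continuous_on_euler_integrand_at[OF s holomorphic_on_imp_continuous_on[OF \<omega>] that]
    by (simp add: integrable_continuous_interval)
  from leibniz_rule_field_derivative[OF D this cont x convex_ball]
  show ?thesis by (simp add: euler_integral_def[abs_def] at_within_open[OF x open_ball])
qed

(* The integrand is the derivative of \<open>t powr s * \<omega> (t * z)\<close>. *)
lemma euler_integrand_ftc:
  assumes s: "1 < Re s" and \<omega>: "\<omega> holomorphic_on disc" and z: "z \<in> disc"
  shows "((\<lambda>t. s * euler_integrand s \<omega> z t + z * euler_integrand (s + 1) (deriv \<omega>) z t)
           has_integral \<omega> z) {0..1}"
proof -
  define \<Phi> where "\<Phi> w = w powr s * \<omega> (w * z)" for w :: complex
  define \<Phi>' where "\<Phi>' t = s * euler_integrand s \<omega> z t + z * euler_integrand (s + 1) (deriv \<omega>) z t" for t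
  have "(\<Phi>' has_integral (\<Phi> (of_real 1) - \<Phi> (of_real 0))) {0..1}"
  proof (rule fundamental_theorem_of_calculus_interior_strong[where S="{}"])
    fix t :: real assume t: "t \<in> {0<..<1} - {}"
    have "complex_of_real t \<notin> \<real>\<^sub>\<le>\<^sub>0" using t by (auto simp: complex_nonpos_Reals_iff)
    then have d1: "((\<lambda>w. w powr s) has_field_derivative s * of_real t powr (s - 1)) (at (of_real t))"
      by (rule has_field_derivative_powr)
    have "(\<omega> has_field_derivative deriv \<omega> (of_real t * z)) (at (of_real t * z))"
      using \<omega> of_real_mult_in_disc[OF z, of t] t by (intro holomorphic_derivI[OF \<omega>]) auto
    moreover have "((\<lambda>w. w * z) has_field_derivative z) (at (of_real t))"
      by (auto intro!: derivative_eq_intros)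
    ultimately have d2:
        "((\<lambda>w. \<omega> (w * z)) has_field_derivative deriv \<omega> (of_real t * z) * z) (at (of_real t))"
      by (rule DERIV_chain2)
    have "s * of_real t powr (s - 1) * \<omega> (of_real t * z)
        + deriv \<omega> (of_real t * z) * z * of_real t powr s = \<Phi>' t"
      using powr_diff_one_mult_self[of "of_real t" s]
      by (simp add: \<Phi>'_def euler_integrand_def algebra_simps)
    with DERIV_mult[OF d1 d2] have "(\<Phi> has_field_derivative \<Phi>' t) (at (of_real t))"
      unfolding \<Phi>_def by simp
    then show "((\<lambda>t. \<Phi> (of_real t)) has_vector_derivative \<Phi>' t) (at t)"
      by (rule has_vector_derivative_real_field)
  next
    have "continuous_on {0..1::real} (\<lambda>t. complex_of_real t powr s)"
      using s by (intro continuous_intros) auto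
    moreover have "continuous_on {0..1::real} (\<lambda>t. \<omega> (of_real t * z))"
      using holomorphic_on_imp_continuous_on[OF \<omega>]
      by (rule continuous_on_compose2) (intro continuous_intros, use z of_real_mult_in_disc in auto)
    ultimately show "continuous_on {0..1} (\<lambda>t. \<Phi> (of_real t))"
      unfolding \<Phi>_def by (simp add: continuous_on_mult mult.commute)
  qed auto
  then show ?thesis by (simp add: \<Phi>_def \<Phi>'_def[abs_def])
qed

lemma euler_integral_equation:
  assumes s: "1 < Re s" and \<omega>: "\<omega> holomorphic_on disc" and z: "z \<in> disc"
  shows "z * deriv (euler_integral s \<omega>) z + s * euler_integral s \<omega> z = \<omega> z"
proof -
  have "continuous_on disc (deriv \<omega>)"
    using \<omega> by (intro holomorphic_on_imp_continuous_on holomorphic_deriv) auto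
  then have "euler_integrand (s + 1) (deriv \<omega>) z integrable_on {0..1}"
    using continuous_on_euler_integrand_at[of "s + 1" "deriv \<omega>" z] s z
    by (simp add: integrable_continuous_interval)
  moreover have "euler_integrand s \<omega> z integrable_on {0..1}"
    using continuous_on_euler_integrand_at[OF s holomorphic_on_imp_continuous_on[OF \<omega>] z]
    by (simp add: integrable_continuous_interval)
  ultimately have "((\<lambda>t. s * euler_integrand s \<omega> z t + z * euler_integrand (s + 1) (deriv \<omega>) z t)
      has_integral s * euler_integral s \<omega> z + z * euler_integral (s + 1) (deriv \<omega>) z) {0..1}"
    unfolding euler_integral_def by (intro has_integral_add has_integral_mult_right integrable_integral)
  with euler_integrand_ftc[OF s \<omega> z]
  have "s * euler_integral s \<omega> z + z * euler_integral (s + 1) (deriv \<omega>) z = \<omega> z"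
    by (rule has_integral_unique[symmetric])
  then show ?thesis
    using DERIV_imp_deriv[OF euler_integral_has_field_derivative[OF s \<omega> z]] by (simp add: algebra_simps)
qed

lemma euler_integral_weighted_bound:
  assumes s: "1 < Re s" and \<omega>: "continuous_on disc \<omega>" and \<alpha>: "0 \<le> \<alpha>"
    and K: "\<And>z. z \<in> disc \<Longrightarrow> disc_weight \<alpha> z * cmod (\<omega> z) \<le> K" and z: "z \<in> disc"
  shows "disc_weight \<alpha> z * cmod (euler_integral s \<omega> z) \<le> K"
proof -
  have W: "0 < disc_weight \<alpha> z" using disc_weight_pos[OF z] .
  have pointwise: "cmod (euler_integrand s \<omega> z t) \<le> K / disc_weight \<alpha> z" if t: "t \<in> {0..1}" for t
  proof -
    have tz: "of_real t * z \<in> disc" using of_real_mult_in_disc[OF z t] .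
    have "disc_weight \<alpha> z \<le> disc_weight \<alpha> (of_real t * z)"
      using t z \<alpha> by (intro disc_weight_antimono) (auto simp: norm_mult mult_left_le_one_le)
    then have "disc_weight \<alpha> z * cmod (\<omega> (of_real t * z))
        \<le> disc_weight \<alpha> (of_real t * z) * cmod (\<omega> (of_real t * z))"
      by (rule mult_right_mono) simp
    then have "disc_weight \<alpha> z * cmod (\<omega> (of_real t * z)) \<le> K"
      using K[OF tz] by linarith
    then have "cmod (\<omega> (of_real t * z)) \<le> K / disc_weight \<alpha> z" using W by (simp add: field_simps)
    moreover have "cmod (complex_of_real t powr (s - 1)) = t powr (Re s - 1)"
      using t by (simp add: norm_powr_real_powr)
    then have "cmod (complex_of_real t powr (s - 1)) \<le> 1"
      using t s by (simp add: powr_le1)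
    ultimately have "cmod (of_real t powr (s - 1)) * cmod (\<omega> (of_real t * z))
        \<le> 1 * (K / disc_weight \<alpha> z)"
      by (intro mult_mono) auto
    then show ?thesis by (simp add: euler_integrand_def norm_mult)
  qed
  have "cmod (euler_integral s \<omega> z) \<le> K / disc_weight \<alpha> z * measure lborel (cbox (0::real) 1)"
  proof (rule has_integral_bound)
    show "0 \<le> K / disc_weight \<alpha> z" using order_trans[OF norm_ge_zero pointwise[of 0]] by simp
    show "(euler_integrand s \<omega> z has_integral euler_integral s \<omega> z) (cbox 0 1)"
      using continuous_on_euler_integrand_at[OF s \<omega> z]
      by (simp add: euler_integral_def integrable_continuous_interval integrable_integral)
    show "\<And>t. t \<in> cbox 0 1 \<Longrightarrow> cmod (euler_integrand s \<omega> z t) \<le> K / disc_weight \<alpha> z"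
      using pointwise by simp
  qed
  then show ?thesis using W by (simp add: field_simps)
qed

definition euler_solvable :: "real \<Rightarrow> complex \<Rightarrow> real \<Rightarrow> bool" where
  "euler_solvable \<alpha> s C \<longleftrightarrow>
     (\<forall>\<omega> K. \<omega> holomorphic_on disc \<longrightarrow> (\<forall>z\<in>disc. disc_weight \<alpha> z * cmod (\<omega> z) \<le> K) \<longrightarrow>
        (\<exists>H. H holomorphic_on disc \<and> (\<forall>z\<in>disc. z * deriv H z + s * H z = \<omega> z)
             \<and> (\<forall>z\<in>disc. disc_weight \<alpha> z * cmod (H z) \<le> C * K)))"

lemma euler_solvableD:
  assumes "euler_solvable \<alpha> s C" "\<omega> holomorphic_on disc"
    and "\<And>z. z \<in> disc \<Longrightarrow> disc_weight \<alpha> z * cmod (\<omega> z) \<le> K"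
  obtains H where "H holomorphic_on disc" "\<And>z. z \<in> disc \<Longrightarrow> z * deriv H z + s * H z = \<omega> z"
    "\<And>z. z \<in> disc \<Longrightarrow> disc_weight \<alpha> z * cmod (H z) \<le> C * K"
  using assms unfolding euler_solvable_def by blast

lemma euler_solvable_base:
  assumes \<alpha>: "0 \<le> \<alpha>" and s: "1 < Re s"
  shows "euler_solvable \<alpha> s 1"
  unfolding euler_solvable_def
proof (intro allI impI exI conjI ballI)
  fix \<omega> K assume \<omega>: "\<omega> holomorphic_on disc" and K: "\<forall>z\<in>disc. disc_weight \<alpha> z * cmod (\<omega> z) \<le> K"
  show "euler_integral s \<omega> holomorphic_on disc"
    unfolding holomorphic_on_open[OF open_ball]
    using euler_integral_has_field_derivative[OF s \<omega>] by blast
  fix z assume z: "z \<in> disc"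
  show "z * deriv (euler_integral s \<omega>) z + s * euler_integral s \<omega> z = \<omega> z"
    by (rule euler_integral_equation[OF s \<omega> z])
  show "disc_weight \<alpha> z * cmod (euler_integral s \<omega> z) \<le> 1 * K"
    using euler_integral_weighted_bound[OF s holomorphic_on_imp_continuous_on[OF \<omega>] \<alpha> _ z] K by simp
qed

lemma euler_equation_shift:
  assumes s: "s \<noteq> 0" and H1: "H1 holomorphic_on disc"
    and eq: "\<And>z. z \<in> disc \<Longrightarrow> z * deriv H1 z + (s + 1) * H1 z = divz (\<lambda>w. \<omega> w - \<omega> 0) z"
  defines "H \<equiv> \<lambda>z. \<omega> 0 / s + z * H1 z"
  shows "H holomorphic_on disc" "\<And>z. z \<in> disc \<Longrightarrow> z * deriv H z + s * H z = \<omega> z"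
proof -
  have dH: "(H has_field_derivative H1 z + z * deriv H1 z) (at z)" if "z \<in> disc" for z
    unfolding H_def using holomorphic_derivI[OF H1 open_ball that]
    by (auto intro!: derivative_eq_intros)
  then show "H holomorphic_on disc" unfolding holomorphic_on_open[OF open_ball] by blast
  fix z assume z: "z \<in> disc"
  have "z * deriv H z + s * H z = \<omega> 0 + z * (z * deriv H1 z + (s + 1) * H1 z)"
    using DERIV_imp_deriv[OF dH[OF z]] s by (simp add: H_def field_simps)
  also have "\<dots> = \<omega> z" using eq[OF z] mult_divz[of "\<lambda>w. \<omega> w - \<omega> 0" z] by simp
  finally show "z * deriv H z + s * H z = \<omega> z" .
qed

lemma euler_solvable_shift:
  assumes \<alpha>: "0 \<le> \<alpha>" and s: "s \<noteq> 0" and C: "euler_solvable \<alpha> (s + 1) C"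
  shows "euler_solvable \<alpha> s (1 / cmod s + C * (4 / disc_weight \<alpha> (1/2)))"
  unfolding euler_solvable_def
proof (intro allI impI)
  fix \<omega> K assume \<omega>: "\<omega> holomorphic_on disc" and K: "\<forall>z\<in>disc. disc_weight \<alpha> z * cmod (\<omega> z) \<le> K"
  let ?q = "divz (\<lambda>w. \<omega> w - \<omega> 0)"
  have "(\<lambda>w. \<omega> w - \<omega> 0) holomorphic_on disc" using \<omega> by (intro holomorphic_intros)
  then have q: "?q holomorphic_on disc" by (rule holomorphic_on_divz) simp
  have q_bound: "disc_weight \<alpha> z * cmod (?q z) \<le> 4 / disc_weight \<alpha> (1/2) * K" if "z \<in> disc" for z
    by (rule disc_weight_divz_bound[OF \<omega> \<alpha> _ that]) (use K in blast)
  obtain H1 where H1: "H1 holomorphic_on disc"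
      "\<And>z. z \<in> disc \<Longrightarrow> z * deriv H1 z + (s + 1) * H1 z = ?q z"
      "\<And>z. z \<in> disc \<Longrightarrow> disc_weight \<alpha> z * cmod (H1 z) \<le> C * (4 / disc_weight \<alpha> (1/2) * K)"
    using euler_solvableD[OF C q q_bound] by blast
  define H where "H z = \<omega> 0 / s + z * H1 z" for z
  have "disc_weight \<alpha> z * cmod (H z) \<le> (1 / cmod s + C * (4 / disc_weight \<alpha> (1/2))) * K"
    if z: "z \<in> disc" for z
  proof -
    have W: "0 < disc_weight \<alpha> z" "disc_weight \<alpha> z \<le> 1"
      using disc_weight_pos[OF z] disc_weight_le_1[OF z \<alpha>] by auto
    have "disc_weight \<alpha> z * cmod (H z)
        \<le> disc_weight \<alpha> z * cmod (\<omega> 0) / cmod s + cmod z * (disc_weight \<alpha> z * cmod (H1 z))"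
      using mult_left_mono[OF norm_triangle_ineq[of "\<omega> 0 / s" "z * H1 z"], of "disc_weight \<alpha> z"] W
      by (simp add: H_def norm_mult norm_divide algebra_simps)
    also have "\<dots> \<le> K / cmod s + C * (4 / disc_weight \<alpha> (1/2) * K)"
    proof (rule add_mono)
      have "disc_weight \<alpha> z * cmod (\<omega> 0) \<le> cmod (\<omega> 0)" using W by (simp add: mult_left_le_one_le)
      also have "\<dots> \<le> K" using K[rule_format, of 0] by simp
      finally show "disc_weight \<alpha> z * cmod (\<omega> 0) / cmod s \<le> K / cmod s"
        by (rule divide_right_mono) simp
      have "cmod z * (disc_weight \<alpha> z * cmod (H1 z)) \<le> disc_weight \<alpha> z * cmod (H1 z)"
        using z W by (intro mult_left_le_one_le) auto
      then show "cmod z * (disc_weight \<alpha> z * cmod (H1 z)) \<le> C * (4 / disc_weight \<alpha> (1/2) * K)"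
        using H1(3)[OF z] by linarith
    qed
    finally show ?thesis by (simp add: algebra_simps)
  qed
  with euler_equation_shift[OF s H1(1,2)]
  show "\<exists>H. H holomorphic_on disc \<and> (\<forall>z\<in>disc. z * deriv H z + s * H z = \<omega> z)
      \<and> (\<forall>z\<in>disc. disc_weight \<alpha> z * cmod (H z) \<le> (1 / cmod s + C * (4 / disc_weight \<alpha> (1/2))) * K)"
    unfolding H_def by blast
qed

lemma euler_solvable_exists:
  assumes \<alpha>: "0 \<le> \<alpha>" and s: "\<And>j::nat. s + of_nat j \<noteq> 0"
  obtains C where "euler_solvable \<alpha> s C"
proof -
  have "\<exists>C. euler_solvable \<alpha> s C" if "1 < Re s + of_nat n" "\<And>j::nat. s + of_nat j \<noteq> 0" for n s
    using that
  proof (induction n arbitrary: s)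
    case 0
    then show ?case using euler_solvable_base[OF \<alpha>] by auto
  next
    case (Suc n)
    have "1 < Re (s + 1) + of_nat n" using Suc.prems(1) by simp
    moreover have "(s + 1) + of_nat j \<noteq> 0" for j :: nat
      using Suc.prems(2)[of "Suc j"] by (simp add: add_ac)
    ultimately obtain C where "euler_solvable \<alpha> (s + 1) C" using Suc.IH by blast
    with euler_solvable_shift[OF \<alpha>] Suc.prems(2)[of 0] show ?case by auto
  qed
  moreover have "1 < Re s + of_nat (nat \<lceil>1 - Re s\<rceil> + 1)" by linarith
  ultimately show ?thesis using s that by blast
qed

lemma euler_homogeneous_unique:
  assumes \<Delta>: "\<Delta> holomorphic_on disc" "\<Delta> 0 = 0"
    and eq: "\<And>z. z \<in> disc \<Longrightarrow> z * deriv \<Delta> z + s * \<Delta> z = 0"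
    and s: "\<And>k::nat. k \<ge> 1 \<Longrightarrow> s + of_nat k \<noteq> 0"
    and z: "z \<in> disc"
  shows "\<Delta> z = 0"
proof -
  have "\<Delta> constant_on disc"
  proof (rule ccontr)
    assume "\<not> \<Delta> constant_on disc"
    then obtain h r n where n: "0 < n" and r: "0 < r" "ball 0 r \<subseteq> disc"
      and h: "h holomorphic_on ball 0 r" and fac: "\<And>w. w \<in> ball 0 r \<Longrightarrow> \<Delta> w = (w - 0) ^ n * h w"
      and hnz: "\<And>w. w \<in> ball 0 r \<Longrightarrow> h w \<noteq> 0"
      using holomorphic_factor_zero_nonconstant[OF \<Delta>(1) open_ball connected_ball
          centre_in_ball[THEN iffD2, OF zero_less_one] \<Delta>(2)]
      by metis
    define q where "q w = (of_nat n + s) * h w + w * deriv h w" for w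
    (* \<open>z \<Delta>' + s \<Delta> = z^n q\<close>, so \<open>q\<close> vanishes off \<open>0\<close>, hence by continuity also at \<open>0\<close>,
       where it is \<open>(n + s) h 0 \<noteq> 0\<close>. *)
    have q0: "q w = 0" if w: "w \<in> ball 0 r" "w \<noteq> 0" for w
    proof -
      have "((\<lambda>w. w ^ n * h w) has_field_derivative of_nat n * w ^ (n - 1) * h w + deriv h w * w ^ n)
          (at w)"
        using holomorphic_derivI[OF h open_ball w(1)] by (auto intro!: derivative_eq_intros)
      then have "(\<Delta> has_field_derivative of_nat n * w ^ (n - 1) * h w + deriv h w * w ^ n) (at w)"
        by (rule has_field_derivative_transform_within_open[OF _ open_ball w(1)]) (simp add: fac)
      then have "0 = w * (of_nat n * w ^ (n - 1) * h w + deriv h w * w ^ n) + s * (w ^ n * h w)"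
        using eq[of w] w r fac[OF w(1)] by (auto simp: DERIV_imp_deriv)
      also have "\<dots> = w ^ n * q w"
        using n by (simp add: q_def power_eq_if algebra_simps)
      finally show ?thesis using w(2) by simp
    qed
    have "continuous_on (ball 0 r) (\<lambda>w. cmod (q w))"
      unfolding q_def using h
      by (intro continuous_intros holomorphic_on_imp_continuous_on holomorphic_deriv) auto
    from le_at_centre_if_le_punctured[where \<psi>="\<lambda>w. 0", OF r(1) this] q0
    have "(of_nat n + s) * h 0 = 0" by (simp add: q_def)
    then show False using hnz[of 0] r(1) s[of n] n by (simp add: add.commute)
  qed
  then obtain c where "\<And>w. w \<in> disc \<Longrightarrow> \<Delta> w = c" unfolding constant_on_def by blast
  then show ?thesis using \<Delta>(2) z by (metis centre_in_ball zero_less_one)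
qed

section \<open>The resolvent\<close>

lemma alexander_op_minus_injective:
  assumes g: "g holomorphic_on disc" and \<mu>: "\<mu> \<noteq> 0" and \<mu>n: "\<And>n::nat. n \<ge> 1 \<Longrightarrow> \<mu> \<noteq> g 0 / of_nat n"
    and f: "disc_hol0 f" and eigen: "(\<lambda>z. alexander_op g f z - \<mu> * f z) = (\<lambda>z. 0)"
  shows "f = (\<lambda>z. 0)"
proof -
  define E where "E = alexander_factor g (1 / \<mu>)"
  define F where "F z = f z / E z" for z
  have E: "E holomorphic_on disc" "\<And>z. E z \<noteq> 0"
    unfolding E_def using holomorphic_on_alexander_factor[OF g] alexander_factor_nonzero by auto
  have F: "F holomorphic_on disc" "F 0 = 0"
    using f E unfolding F_def disc_hol0_def by (auto intro!: holomorphic_intros)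
  have f_eq: "f = (\<lambda>w. E w * F w)" using E(2) by (simp add: F_def)
  have "z * deriv F z + (- g 0 / \<mu>) * F z = 0" if z: "z \<in> disc" for z
  proof (cases "z = 0")
    case False
    have "0 = deriv (\<lambda>z. alexander_op g f z - \<mu> * f z) z" by (simp add: eigen)
    also have "\<dots> = E z * (g 0 * F z - \<mu> * z * deriv F z) / z"
      using deriv_alexander_op_minus_factor[OF g \<mu> F z False] unfolding f_eq E_def by simp
    finally show ?thesis using E(2)[of z] False \<mu> by (simp add: field_simps)
  qed (simp add: F(2))
  moreover have "- g 0 / \<mu> + of_nat k \<noteq> 0" if "k \<ge> 1" for k :: nat
    using \<mu>n[OF that] \<mu> that by (auto simp: field_simps)
  ultimately have "F z = 0" if "z \<in> disc" for z
    using euler_homogeneous_unique[OF F] that by blast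
  then show ?thesis
    using f unfolding f_eq disc_hol0_def by (metis mult_zero_right)
qed

lemma bloch0_disc_times_z:
  assumes H: "H holomorphic_on disc"
    and eq: "\<And>z. z \<in> disc \<Longrightarrow> z * deriv H z + s * H z = \<omega> z"
    and K: "\<And>z. z \<in> disc \<Longrightarrow> disc_weight \<alpha> z * cmod (\<omega> z) \<le> K"
    and L: "\<And>z. z \<in> disc \<Longrightarrow> disc_weight \<alpha> z * cmod (H z) \<le> L"
  shows "disc_times_z H \<in> bloch0 \<alpha>" "bloch_norm \<alpha> (disc_times_z H) \<le> K + cmod (1 - s) * L"
proof -
  have le: "bloch_weight \<alpha> (disc_times_z H) z \<le> K + cmod (1 - s) * L" if z: "z \<in> disc" for z
  proof -
    have "deriv (disc_times_z H) z = \<omega> z + (1 - s) * H z"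
      using DERIV_imp_deriv[OF disc_times_z_has_field_derivative[OF H z]]
      by (subst eq[OF z, symmetric]) (simp add: algebra_simps)
    then have "bloch_weight \<alpha> (disc_times_z H) z
        \<le> disc_weight \<alpha> z * (cmod (\<omega> z) + cmod (1 - s) * cmod (H z))"
      using disc_weight_pos[OF z, of \<alpha>] norm_triangle_ineq[of "\<omega> z" "(1 - s) * H z"]
      by (simp add: bloch_weight_eq norm_mult mult_left_mono)
    also have "\<dots> = disc_weight \<alpha> z * cmod (\<omega> z) + cmod (1 - s) * (disc_weight \<alpha> z * cmod (H z))"
      by (simp add: algebra_simps)
    also have "\<dots> \<le> K + cmod (1 - s) * L"
      using K[OF z] L[OF z] by (intro add_mono mult_left_mono) auto
    finally show ?thesis .
  qed
  show "disc_times_z H \<in> bloch0 \<alpha>"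
    using disc_hol0_disc_times_z[OF H] unfolding disc_hol0_def by (blast intro: bloch0I[OF _ _ _ le])
  show "bloch_norm \<alpha> (disc_times_z H) \<le> K + cmod (1 - s) * L"
    using le by (rule bloch_norm_le)
qed

lemma alexander_op_minus_eq_of_euler:
  assumes g: "g holomorphic_on disc" and \<mu>: "\<mu> \<noteq> 0" and u: "disc_hol0 u"
    and H: "H holomorphic_on disc"
    and eq: "\<And>z. z \<in> disc \<Longrightarrow>
      z * deriv H z + (1 - g 0 / \<mu>) * H z = - deriv u z / (\<mu> * alexander_factor g (1 / \<mu>) z)"
  defines "f \<equiv> \<lambda>z. alexander_factor g (1 / \<mu>) z * disc_times_z H z"
  shows "(\<lambda>z. alexander_op g f z - \<mu> * f z) = u"
proof (rule disc_hol0_eqI[OF _ u])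
  let ?E = "alexander_factor g (1 / \<mu>)"
  have F: "disc_times_z H holomorphic_on disc" "disc_times_z H 0 = 0"
    using disc_hol0_disc_times_z[OF H] by (auto simp: disc_hol0_def)
  have "f holomorphic_on disc"
    unfolding f_def using F(1) holomorphic_on_alexander_factor[OF g] by (intro holomorphic_intros)
  then have "disc_hol0 f" by (simp add: disc_hol0_def f_def disc_times_z_def)
  then show "disc_hol0 (\<lambda>z. alexander_op g f z - \<mu> * f z)"
    by (rule disc_hol0_alexander_op_minus[OF _ g])
  fix z assume z: "z \<in> disc" "z \<noteq> 0"
  have "deriv (disc_times_z H) z = H z + z * deriv H z"
    using disc_times_z_has_field_derivative[OF H z(1)] by (rule DERIV_imp_deriv)
  moreover have "disc_times_z H z = z * H z" using z(1) by (simp add: disc_times_z_def)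
  ultimately have "deriv (\<lambda>z. alexander_op g f z - \<mu> * f z) z
      = ?E z * (g 0 * (z * H z) - \<mu> * z * (H z + z * deriv H z)) / z"
    using deriv_alexander_op_minus_factor[OF g \<mu> F z] unfolding f_def by simp
  also have "\<dots> = - \<mu> * ?E z * (z * deriv H z + (1 - g 0 / \<mu>) * H z)"
    using z(2) \<mu> by (simp add: field_simps)
  also have "\<dots> = deriv u z"
    using eq[OF z(1)] \<mu> alexander_factor_nonzero[of g "1 / \<mu>" z] by (simp add: field_simps)
  finally show "deriv (\<lambda>z. alexander_op g f z - \<mu> * f z) z = deriv u z" .
qed

lemma alexander_op_minus_preimage:
  fixes g :: "complex \<Rightarrow> complex" and \<mu> :: complex
  defines "E \<equiv> alexander_factor g (1 / \<mu>)"
  assumes g: "g holomorphic_on disc" and \<alpha>: "0 \<le> \<alpha>" and \<mu>: "\<mu> \<noteq> 0"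
    and B: "\<And>z. z \<in> disc \<Longrightarrow> cmod (E z) \<le> B" "\<And>z. z \<in> disc \<Longrightarrow> cmod (deriv E z) \<le> B"
      "\<And>z. z \<in> disc \<Longrightarrow> cmod (1 / E z) \<le> B"
    and C: "euler_solvable \<alpha> (1 - g 0 / \<mu>) C" and u: "u \<in> bloch0 \<alpha>"
  shows "\<exists>f\<in>bloch0 \<alpha>. (\<lambda>z. alexander_op g f z - \<mu> * f z) = u
      \<and> bloch_norm \<alpha> f \<le> (B + B) * (1 + cmod (g 0 / \<mu>) * C) * (B / cmod \<mu>) * bloch_norm \<alpha> u"
proof -
  define K where "K = B / cmod \<mu> * bloch_norm \<alpha> u"
  define \<omega> where "\<omega> z = - deriv u z / (\<mu> * E z)" for z
  have E: "E holomorphic_on disc" "\<And>z. E z \<noteq> 0"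
    unfolding E_def using holomorphic_on_alexander_factor[OF g] alexander_factor_nonzero by auto
  have \<omega>: "\<omega> holomorphic_on disc"
    unfolding \<omega>_def using bloch0D(1)[OF u] E \<mu> by (intro holomorphic_intros) auto
  have \<omega>K: "disc_weight \<alpha> z * cmod (\<omega> z) \<le> K" if z: "z \<in> disc" for z
  proof -
    have "disc_weight \<alpha> z * cmod (\<omega> z) = (disc_weight \<alpha> z * cmod (deriv u z)) * cmod (1 / E z) / cmod \<mu>"
      by (simp add: \<omega>_def norm_mult norm_divide)
    also have "\<dots> \<le> bloch_norm \<alpha> u * B / cmod \<mu>"
      using deriv_le_bloch_norm[OF u z] B(3)[OF z] bloch_norm_nonneg[OF u] disc_weight_pos[OF z, of \<alpha>]
      by (intro divide_right_mono mult_mono) auto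
    finally show ?thesis by (simp add: K_def mult.commute)
  qed
  obtain H where H: "H holomorphic_on disc"
    "\<And>z. z \<in> disc \<Longrightarrow> z * deriv H z + (1 - g 0 / \<mu>) * H z = \<omega> z"
    "\<And>z. z \<in> disc \<Longrightarrow> disc_weight \<alpha> z * cmod (H z) \<le> C * K"
    using euler_solvableD[OF C \<omega> \<omega>K] by blast
  note F = bloch0_disc_times_z[OF H(1,2) \<omega>K H(3)]
  define f where "f z = E z * disc_times_z H z" for z
  have f: "f \<in> bloch0 \<alpha>" "bloch_norm \<alpha> f \<le> (B + B) * bloch_norm \<alpha> (disc_times_z H)"
    unfolding f_def[abs_def] using bloch0_multiplier[OF F(1) \<alpha> E(1) B(1,2)] by auto
  have "(\<lambda>z. alexander_op g f z - \<mu> * f z) = u"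
    unfolding f_def[abs_def] E_def
    by (rule alexander_op_minus_eq_of_euler[OF g \<mu> bloch0_imp_disc_hol0[OF u] H(1)])
       (use H(2) in \<open>simp add: \<omega>_def E_def\<close>)
  moreover have "0 \<le> B" using B(1)[of 0]
    by (meson centre_in_ball norm_ge_zero order_trans zero_less_one)
  then have "(B + B) * bloch_norm \<alpha> (disc_times_z H) \<le> (B + B) * (K + cmod (g 0 / \<mu>) * (C * K))"
    using F(2) by (intro mult_left_mono) auto
  then have "bloch_norm \<alpha> f \<le> (B + B) * (1 + cmod (g 0 / \<mu>) * C) * (B / cmod \<mu>) * bloch_norm \<alpha> u"
    using f(2) by (simp add: K_def algebra_simps)
  ultimately show ?thesis using f(1) by blast
qed

lemma alexander_op_minus_surjective:
  assumes g: "g holomorphic_on disc" and G: "\<And>z. z \<in> disc \<Longrightarrow> cmod (g z) \<le> G" and \<alpha>: "0 \<le> \<alpha>"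
    and \<mu>: "\<mu> \<noteq> 0" and \<mu>n: "\<And>n::nat. n \<ge> 1 \<Longrightarrow> \<mu> \<noteq> g 0 / of_nat n"
  obtains M where "\<And>u. u \<in> bloch0 \<alpha> \<Longrightarrow>
    \<exists>f\<in>bloch0 \<alpha>. (\<lambda>z. alexander_op g f z - \<mu> * f z) = u \<and> bloch_norm \<alpha> f \<le> M * bloch_norm \<alpha> u"
proof -
  obtain B where B: "\<And>z. z \<in> disc \<Longrightarrow> cmod (alexander_factor g (1 / \<mu>) z) \<le> B"
    "\<And>z. z \<in> disc \<Longrightarrow> cmod (deriv (alexander_factor g (1 / \<mu>)) z) \<le> B"
    "\<And>z. z \<in> disc \<Longrightarrow> cmod (1 / alexander_factor g (1 / \<mu>) z) \<le> B"
    using alexander_factor_bounds[OF g G] by blast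
  have "1 - g 0 / \<mu> + of_nat j \<noteq> 0" for j :: nat
  proof
    assume "1 - g 0 / \<mu> + of_nat j = 0"
    moreover have "of_nat (Suc j) \<noteq> (0::complex)" by (rule of_nat_neq_0)
    ultimately have "\<mu> = g 0 / of_nat (Suc j)" using \<mu> by (simp add: field_simps)
    with \<mu>n[of "Suc j"] show False by simp
  qed
  then obtain C where "euler_solvable \<alpha> (1 - g 0 / \<mu>) C" using euler_solvable_exists[OF \<alpha>] by blast
  from alexander_op_minus_preimage[OF g \<alpha> \<mu> B this] show ?thesis by (rule that)
qed

lemma bloch_spectrum_alexander_op:
  assumes g: "g holomorphic_on disc" and G: "\<And>z. z \<in> disc \<Longrightarrow> cmod (g z) \<le> G" and \<alpha>: "0 \<le> \<alpha>"
  shows "bloch_spectrum \<alpha> (alexander_op g) = {g 0 / of_nat n | n. n \<ge> 1} \<union> {0}"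
proof (intro equalityI subsetI)
  fix \<mu> assume \<mu>: "\<mu> \<in> bloch_spectrum \<alpha> (alexander_op g)"
  show "\<mu> \<in> {g 0 / of_nat n | n. n \<ge> 1} \<union> {0}"
  proof (rule ccontr)
    assume "\<mu> \<notin> {g 0 / of_nat n | n. n \<ge> 1} \<union> {0}"
    then have \<mu>0: "\<mu> \<noteq> 0" and \<mu>n: "\<And>n::nat. n \<ge> 1 \<Longrightarrow> \<mu> \<noteq> g 0 / of_nat n" by auto
    obtain M where "\<And>u. u \<in> bloch0 \<alpha> \<Longrightarrow> \<exists>f\<in>bloch0 \<alpha>.
        (\<lambda>z. alexander_op g f z - \<mu> * f z) = u \<and> bloch_norm \<alpha> f \<le> M * bloch_norm \<alpha> u"
      using alexander_op_minus_surjective[OF g G \<alpha> \<mu>0 \<mu>n] by blast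
    then have "\<mu> \<notin> bloch_spectrum \<alpha> (alexander_op g)"
      using bounded_op_on_alexander_op[OF g G \<alpha>]
        alexander_op_minus_injective[OF g \<mu>0 \<mu>n bloch0_imp_disc_hol0]
      by (intro not_in_bloch_spectrumI) blast+
    then show False using \<mu> by contradiction
  qed
next
  fix \<mu> assume "\<mu> \<in> {g 0 / of_nat n | n. n \<ge> 1} \<union> {0}"
  then consider "\<mu> = 0" | n :: nat where "n \<ge> 1" "\<mu> = g 0 / of_nat n" "g 0 \<noteq> 0"
    by (cases "g 0 = 0") auto
  then show "\<mu> \<in> bloch_spectrum \<alpha> (alexander_op g)"
  proof cases
    case 1
    have "\<And>f. f \<in> bloch0 \<alpha> \<Longrightarrow> alexander_op g f \<in> bloch0 \<alpha>"
      using alexander_op_bloch0(1)[OF _ g G \<alpha>] .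
    with approx_eigenvalue_alexander_op_0[OF \<alpha> g G] show ?thesis
      unfolding 1 by (rule approx_eigenvalue_in_bloch_spectrum)
  next
    case 2
    with alexander_op_eigenfunction[OF g G \<alpha> 2(1,3)] show ?thesis
      by (auto intro: eigenvalue_in_bloch_spectrum)
  qed
qed

theorem theorem5p3:
  fixes \<alpha> :: real and k :: nat and a :: "nat \<Rightarrow> complex"
    and h g0 :: "complex \<Rightarrow> complex"
  assumes "\<alpha> > 0"
    and "k \<ge> 1"
    and "\<forall>j\<in>{1..k}. a j \<noteq> 0"
    and "h holomorphic_on ball 0 1"
    and "bounded (h ` ball 0 1)"
    and "g0 = (\<lambda>w. (\<Sum>j=1..k. a j) + h w)"
  shows "bounded_op_on \<alpha> (alexander_op g0)
    \<and> bloch_spectrum \<alpha> (alexander_op g0) = {g0 0 / of_nat n | n. n \<ge> 1} \<union> {0}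
    \<and> approx_eigenvalue \<alpha> (alexander_op g0) 0"
proof -
  (* Only the boundedness of g0 matters. *)
  have \<alpha>: "0 \<le> \<alpha>" using assms(1) by simp
  have g: "g0 holomorphic_on disc" unfolding assms(6) using assms(4) by (intro holomorphic_intros)
  obtain H where H: "\<And>z. z \<in> disc \<Longrightarrow> cmod (h z) \<le> H"
    using assms(5) unfolding bounded_iff by blast
  have G: "cmod (g0 z) \<le> cmod (\<Sum>j=1..k. a j) + H" if "z \<in> disc" for z
    unfolding assms(6) using norm_triangle_ineq[of "\<Sum>j=1..k. a j" "h z"] H[OF that] by simp
  show ?thesis
    using bounded_op_on_alexander_op[OF g G \<alpha>] bloch_spectrum_alexander_op[OF g G \<alpha>]
      approx_eigenvalue_alexander_op_0[OF \<alpha> g G] by blast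
qed

end
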